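(* Let $p\in(1,\infty)$ and $\gamma>2-1/p$. Then the operator $A:M^{2,p}_{\gamma-2}\times\mathbb{R}^2\to L^p_\gamma$, \[ A(\phi,a,b)=\partial_{xx}\phi+a\,\partial_{xx}S+b\,\partial_{xx}(xS),\qquad S(x)=\tanh(x), \] is invertible.
   Context: $\langle x\rangle=(1+x^2)^{1/2}$. $L^p_\gamma$ is the completion of $C_0^\infty(\mathbb{R})$ under $\|u\|_{L^p_\gamma}=(\int|u\langle x\rangle^\gamma|^p)^{1/p}$; the Kondratiev space $M^{k,p}_\gamma$ is the completion of $C_0^\infty(\mathbb{R})$ under $\|u\|_{M^{k,p}_\gamma}=\big(\sum_{\alpha\le k}\|\partial_x^\alpha u\,\langle x\rangle^{\gamma+\alpha}\|_{L^p}^p\big)^{1/p}$. *)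

theory Defs
  imports "HOL-Analysis.Analysis"
begin

definition jbr :: "real \<Rightarrow> real" where
  "jbr x = sqrt (1 + x\<^sup>2)"

text \<open>Weighted Lebesgue space L^p_gamma on the real line, as a set of functions
  (the completion of compactly supported smooth functions is the space of measurable
  functions with finite weighted norm, for 1 < p < infinity).\<close>
definition wLp :: "real \<Rightarrow> real \<Rightarrow> (real \<Rightarrow> real) \<Rightarrow> bool" where
  "wLp p g u \<longleftrightarrow> u \<in> borel_measurable lborel \<and>
     integrable lborel (\<lambda>x. \<bar>u x * jbr x powr g\<bar> powr p)"

definition wLp_norm :: "real \<Rightarrow> real \<Rightarrow> (real \<Rightarrow> real) \<Rightarrow> real" where
  "wLp_norm p g u = (\<integral>x. \<bar>u x * jbr x powr g\<bar> powr p \<partial>lborel) powr (1 / p)"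

text \<open>Kondratiev space M^{2,p}_gamma: an element is a function phi together with its
  first derivative phi1 (classical, phi is C^1) and its weak second derivative phi2
  (phi1 is absolutely continuous with a.e. derivative phi2), with
  phi in L^p_gamma, phi1 in L^p_(gamma+1), phi2 in L^p_(gamma+2).\<close>
definition kond2 :: "real \<Rightarrow> real \<Rightarrow> (real \<Rightarrow> real) \<Rightarrow> (real \<Rightarrow> real) \<Rightarrow> (real \<Rightarrow> real) \<Rightarrow> bool" where
  "kond2 p g phi phi1 phi2 \<longleftrightarrow>
     (\<forall>x. (phi has_real_derivative phi1 x) (at x)) \<and>
     (\<forall>x y. interval_lebesgue_integrable lborel (ereal x) (ereal y) phi2 \<and>
            phi1 y - phi1 x = (LBINT t=ereal x..ereal y. phi2 t)) \<and>
     wLp p g phi \<and> wLp p (g + 1) phi1 \<and> wLp p (g + 2) phi2"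

definition kond2_norm :: "real \<Rightarrow> real \<Rightarrow> (real \<Rightarrow> real) \<Rightarrow> (real \<Rightarrow> real) \<Rightarrow> (real \<Rightarrow> real) \<Rightarrow> real" where
  "kond2_norm p g phi phi1 phi2 =
     ((wLp_norm p g phi) powr p + (wLp_norm p (g + 1) phi1) powr p
        + (wLp_norm p (g + 2) phi2) powr p) powr (1 / p)"

definition opA :: "(real \<Rightarrow> real) \<Rightarrow> real \<Rightarrow> real \<Rightarrow> real \<Rightarrow> real" where
  "opA phi2 a b x = phi2 x + a * deriv (deriv tanh) x
                    + b * deriv (deriv (\<lambda>y. y * tanh y)) x"

end

theory Submission
  imports Defs "HOL-Real_Asymp.Real_Asymp"
begin

(* The functions S'' and (x S)'' decay exponentially, and their moments are
   \<integral> S'' = 0, \<integral> x S'' = -2, \<integral> (x S)'' = 2, \<integral> x (x S)'' = 0. Hence for f in L^p_\<gamma> there are unique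
   a, b such that g = f - a S'' - b (x S)'' has vanishing zeroth and first moments. For such g
   the double primitive of g lies in M^{2,p}_{\<gamma>-2}: by Hardy's inequality the primitive of a
   mean-zero function in L^p_{\<beta>+1} lies in L^p_\<beta> whenever \<beta> > -1/p, and \<gamma> > 2 - 1/p is exactly
   what is needed for \<beta> = \<gamma> - 1 and \<beta> = \<gamma> - 2 (it also makes L^p_{\<gamma>} and L^p_{\<gamma>-1} embed
   into L^1, so that the moments exist).
   Conversely, if A(phi, a, b) = A(psi, c, d), then phi - psi + (a - c) S + (b - d) x S has zero
   second derivative, so phi - psi is affine up to multiples of S and x S. Such a function is
   asymptotically affine at both ends, and a nonzero affine function is not in L^p_{\<gamma>-2}
   because (\<gamma> - 2) p > -1; this forces phi = psi, a = c and b = d. *)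

section \<open>Elementary inequalities and integrals\<close>

lemma powr_add_le:
  fixes a b r :: real
  assumes "a \<ge> 0" "b \<ge> 0" "r > 0"
  shows "(a + b) powr r \<le> 2 powr r * (a powr r + b powr r)"
proof -
  have "(a + b) powr r \<le> (2 * max a b) powr r"
    using assms by (intro powr_mono2) auto
  also have "\<dots> = 2 powr r * max a b powr r"
    using assms by (simp add: powr_mult)
  also have "max a b powr r \<le> a powr r + b powr r"
    using assms by (auto simp: max_def)
  finally show ?thesis
    by simp
qed

lemma powr_add3_le:
  fixes a b c r :: real
  assumes "a \<ge> 0" "b \<ge> 0" "c \<ge> 0" "r > 0"
  shows "(a + b + c) powr r \<le> 3 powr r * (a powr r + b powr r + c powr r)"
proof -
  define M where "M = max a (max b c)"
  have "(a + b + c) powr r \<le> (3 * M) powr r"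
    using assms by (intro powr_mono2) (auto simp: M_def)
  also have "\<dots> = 3 powr r * M powr r"
    using assms by (simp add: powr_mult M_def)
  also have "M powr r \<le> a powr r + b powr r + c powr r"
    unfolding M_def using assms by (auto simp: max_def)
  finally show ?thesis
    by simp
qed

lemma powr_le_imp_le_powr_mult:
  fixes a b c p :: real
  assumes "p > 0" "a \<ge> 0" "b \<ge> 0" "c \<ge> 0" "a powr p \<le> c * b powr p"
  shows "a \<le> c powr (1/p) * b"
proof -
  have "a = (a powr p) powr (1/p)"
    using assms by (simp add: powr_powr)
  also have "\<dots> \<le> (c * b powr p) powr (1/p)"
    using assms by (intro powr_mono2) auto
  also have "\<dots> = c powr (1/p) * b"
    using assms by (simp add: powr_mult powr_powr)
  finally show ?thesis .
qed

lemma Youngs_inequality_scaled: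
  fixes p q f g a b :: real
  assumes pq: "p > 1" "q > 1" "1/p + 1/q = 1"
    and "f \<ge> 0" "g \<ge> 0" "a > 0" "b > 0"
  shows "f * g \<le> a * b * (f powr p / (a powr p * p) + g powr q / (b powr q * q))"
proof -
  have "(f / a) * (g / b) \<le> (f / a) powr p / p + (g / b) powr q / q"
    using Youngs_inequality[OF pq, of "f / a" "g / b"] assms by auto
  also have "\<dots> = f powr p / (a powr p * p) + g powr q / (b powr q * q)"
    using assms by (simp add: powr_divide)
  finally show ?thesis
    using assms by (simp add: field_simps)
qed

lemma integrable_indicator_mult:
  fixes f :: "'a \<Rightarrow> real"
  shows "A \<in> sets M \<Longrightarrow> integrable M f \<Longrightarrow> integrable M (\<lambda>x. indicator A x * f x)"
  using integrable_mult_indicator[of A M f] by simp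

lemma integrable_le_scaled:
  fixes f g :: "'a \<Rightarrow> real"
  assumes [measurable]: "f \<in> borel_measurable M" and g: "integrable M g"
    and le: "\<And>x. 0 \<le> f x \<and> f x \<le> c * g x"
  shows "integrable M f \<and> integral\<^sup>L M f \<le> c * integral\<^sup>L M g"
proof
  show f: "integrable M f"
    by (rule Bochner_Integration.integrable_bound[of _ "\<lambda>x. c * g x"])
       (use g le in \<open>auto intro!: AE_I2 intro: order_trans[OF _ abs_ge_self]\<close>)
  show "integral\<^sup>L M f \<le> c * integral\<^sup>L M g"
    using integral_mono[OF f _ conjunct2[OF le]] g by simp
qed

lemma integrable_nn_integral_le:
  fixes f :: "'a \<Rightarrow> real"
  assumes [measurable]: "f \<in> borel_measurable M" and nonneg: "\<And>x. f x \<ge> 0"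
    and le: "(\<integral>\<^sup>+x. ennreal (f x) \<partial>M) \<le> ennreal c" and c: "c \<ge> 0"
  shows "integrable M f \<and> integral\<^sup>L M f \<le> c"
proof
  show "integrable M f"
    using le nonneg by (intro integrableI_bounded) (auto simp: le_less_trans)
  have "integral\<^sup>L M f = enn2real (\<integral>\<^sup>+x. ennreal (f x) \<partial>M)"
    using nonneg by (intro integral_eq_nn_integral) auto
  also have "\<dots> \<le> c"
    using le c by (metis enn2real_ennreal enn2real_mono ennreal_less_top)
  finally show "integral\<^sup>L M f \<le> c" .
qed

lemma Holder_inequality:
  fixes f g :: "'a \<Rightarrow> real"
  assumes pq: "p > 1" "q > 1" "1/p + 1/q = 1"
    and [measurable]: "f \<in> borel_measurable M" "g \<in> borel_measurable M"
    and nonneg: "\<And>x. f x \<ge> 0" "\<And>x. g x \<ge> 0"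
    and f: "integrable M (\<lambda>x. f x powr p)" and g: "integrable M (\<lambda>x. g x powr q)"
  shows "integrable M (\<lambda>x. f x * g x) \<and>
    (\<integral>x. f x * g x \<partial>M) \<le> (\<integral>x. f x powr p \<partial>M) powr (1/p) * (\<integral>x. g x powr q \<partial>M) powr (1/q)"
proof -
  define A where "A = (\<integral>x. f x powr p \<partial>M)"
  define B where "B = (\<integral>x. g x powr q \<partial>M)"
  have "A \<ge> 0" "B \<ge> 0"
    unfolding A_def B_def by (auto intro!: integral_nonneg_AE)
  show ?thesis
  proof (cases "A = 0 \<or> B = 0")
    case True
    then have "AE x in M. f x * g x = 0"
      using f g unfolding A_def B_def
      by (auto simp: integral_nonneg_eq_0_iff_AE elim: eventually_mono)
    then have "integrable M (\<lambda>x. f x * g x)" "(\<integral>x. f x * g x \<partial>M) = 0"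
      by (auto intro: integrable_cong_AE[THEN iffD2, of _ _ "\<lambda>_. 0"] integral_eq_zero_AE)
    then show ?thesis
      by (simp add: A_def[symmetric] B_def[symmetric])
  next
    case False
    with \<open>A \<ge> 0\<close> \<open>B \<ge> 0\<close> have "A > 0" "B > 0"
      by auto
    define a where "a = A powr (1/p)"
    define b where "b = B powr (1/q)"
    have "a > 0" "b > 0" "a powr p = A" "b powr q = B"
      using \<open>A > 0\<close> \<open>B > 0\<close> pq by (auto simp: a_def b_def powr_powr)
    define Y where "Y x = a * b * (f x powr p / (A * p) + g x powr q / (B * q))" for x
    have Y: "integrable M Y"
      using f g by (simp add: Y_def[abs_def])
    have "f x * g x \<le> Y x" for x
      using Youngs_inequality_scaled[OF pq nonneg(1,2)[of x] \<open>a > 0\<close> \<open>b > 0\<close>]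
      by (simp add: Y_def \<open>a powr p = A\<close> \<open>b powr q = B\<close>)
    then have le: "integrable M (\<lambda>x. f x * g x) \<and> (\<integral>x. f x * g x \<partial>M) \<le> 1 * integral\<^sup>L M Y"
      using nonneg by (intro integrable_le_scaled[OF _ Y]) auto
    have "integral\<^sup>L M Y = a * b * (A / (A * p) + B / (B * q))"
      using f g by (simp add: Y_def[abs_def] A_def B_def)
    also have "\<dots> = a * b"
      using \<open>A > 0\<close> \<open>B > 0\<close> pq by simp
    finally show ?thesis
      using le by (simp add: a_def b_def A_def B_def)
  qed
qed

lemma lborel_integrable_reflect_iff:
  fixes f :: "real \<Rightarrow> real"
  shows "integrable lborel (\<lambda>x. f (- x)) \<longleftrightarrow> integrable lborel f"
  using lborel_integrable_real_affine_iff[of "-1" f 0] by simp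

lemma lborel_integral_reflect:
  fixes f :: "real \<Rightarrow> real"
  shows "(\<integral>x. f (- x) \<partial>lborel) = (\<integral>x. f x \<partial>lborel)"
  using lborel_integral_real_affine[of "-1" f 0] by simp

lemma has_bochner_integral_tail_powr:
  fixes m x :: real
  assumes m: "m > 1" and x: "x \<ge> 0"
  shows "has_bochner_integral lborel (\<lambda>t. indicator {x..} t * (1 + t) powr (- m))
           ((1 + x) powr (1 - m) / (m - 1))"
proof (rule has_bochner_integral_nn_integral)
  have "(\<integral>\<^sup>+t. ennreal ((1 + t) powr (- m)) * indicator {x..} t \<partial>lborel)
      = ennreal (0 - (- ((1 + x) powr (1 - m)) / (m - 1)))"
  proof (rule nn_integral_FTC_atLeast)
    fix t assume "x \<le> t"
    then have "1 + t > 0"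
      using x by linarith
    then have "((\<lambda>t. - ((1 + t) powr (1 - m)) / (m - 1)) has_real_derivative
        - ((1 - m) * (1 + t) powr (1 - m - 1)) / (m - 1)) (at t)"
      using m by (auto intro!: derivative_eq_intros)
    moreover have "- ((1 - m) * (1 + t) powr (1 - m - 1)) / (m - 1) = (1 + t) powr (- m)"
      using m by (simp add: field_simps)
    ultimately show "((\<lambda>t. - ((1 + t) powr (1 - m)) / (m - 1)) has_real_derivative (1 + t) powr (- m)) (at t)"
      by (rule DERIV_cong)
  next
    show "((\<lambda>t. - ((1 + t) powr (1 - m)) / (m - 1)) \<longlongrightarrow> 0) at_top"
      using m by real_asymp
  qed auto
  then show "(\<integral>\<^sup>+t. ennreal (indicator {x..} t * (1 + t) powr (- m)) \<partial>lborel)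
      = ennreal ((1 + x) powr (1 - m) / (m - 1))"
    by (simp add: ennreal_mult'' ennreal_indicator mult.commute)
qed (use m in auto)

lemma has_bochner_integral_powr_Icc:
  fixes s X T :: real
  assumes s: "s > -1" and X: "0 \<le> X" "X \<le> T"
  shows "has_bochner_integral lborel (\<lambda>x. indicator {X..T} x * (1 + x) powr s)
           (((1 + T) powr (s + 1) - (1 + X) powr (s + 1)) / (s + 1))"
proof -
  have "((\<lambda>x. (1 + x) powr (s + 1) / (s + 1)) has_real_derivative (1 + x) powr s) (at x)"
    if "x \<in> {X..T}" for x
  proof -
    have "1 + x > 0"
      using that X by auto
    then show ?thesis
      using s by (auto intro!: derivative_eq_intros)
  qed
  from integral_FTC_Icc_nonneg[OF _ this _ X(2)] integrable_FTC_Icc_nonneg[OF _ this _ X(2)]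
  show ?thesis
    by (simp add: has_bochner_integral_iff diff_divide_distrib mult.commute)
qed

section \<open>Power weights and weighted Lebesgue spaces\<close>

(* Used alongside jbr because it equals 1 + x on [0, \<infinity>), where the Hardy inequality is proved. *)
definition linbr :: "real \<Rightarrow> real" where
  "linbr x = 1 + \<bar>x\<bar>"

lemma linbr_ge_1: "linbr x \<ge> 1"
  by (simp add: linbr_def)

lemma linbr_pos: "linbr x > 0"
  using linbr_ge_1[of x] by linarith

lemma linbr_minus [simp]: "linbr (- x) = linbr x"
  by (simp add: linbr_def)

lemma borel_measurable_linbr [measurable]: "linbr \<in> borel_measurable borel"
  unfolding linbr_def[abs_def] by measurable

lemma jbr_ge_1: "jbr x \<ge> 1"
  by (simp add: jbr_def)

lemma jbr_pos: "jbr x > 0"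
  using jbr_ge_1[of x] by linarith

lemma jbr_minus [simp]: "jbr (- x) = jbr x"
  by (simp add: jbr_def)

lemma abs_le_jbr: "\<bar>x\<bar> \<le> jbr x"
  unfolding jbr_def by (rule real_le_rsqrt) simp

lemma borel_measurable_jbr [measurable]: "jbr \<in> borel_measurable borel"
  unfolding jbr_def[abs_def] by measurable

lemma jbr_le_linbr: "jbr x \<le> linbr x"
proof -
  have "1 + x\<^sup>2 \<le> (1 + \<bar>x\<bar>)\<^sup>2"
    by (simp add: power2_eq_square algebra_simps)
  then show ?thesis
    unfolding jbr_def linbr_def by (simp add: real_sqrt_le_iff')
qed

lemma linbr_le_jbr: "linbr x \<le> 2 * jbr x"
proof -
  have "(1 + \<bar>x\<bar>)\<^sup>2 \<le> 2\<^sup>2 * (1 + x\<^sup>2)"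
    using zero_le_power2[of "1 - \<bar>x\<bar>"] by (simp add: power2_eq_square algebra_simps)
  then have "1 + \<bar>x\<bar> \<le> sqrt (2\<^sup>2 * (1 + x\<^sup>2))"
    by (simp add: real_le_rsqrt)
  also have "sqrt (2\<^sup>2 * (1 + x\<^sup>2)) = 2 * jbr x"
    by (simp only: real_sqrt_mult real_sqrt_abs jbr_def)
  finally show ?thesis
    unfolding linbr_def .
qed

lemma powr_jbr_le_linbr: "jbr x powr r \<le> 2 powr \<bar>r\<bar> * linbr x powr r"
proof (cases "r \<ge> 0")
  case True
  have "jbr x powr r \<le> linbr x powr r"
    using jbr_le_linbr[of x] jbr_pos[of x] True by (intro powr_mono2) auto
  also have "\<dots> \<le> 2 powr \<bar>r\<bar> * linbr x powr r"
    using mult_right_mono[OF ge_one_powr_ge_zero[of 2 "\<bar>r\<bar>"], of "linbr x powr r"] by simp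
  finally show ?thesis .
next
  case False
  have "jbr x powr r \<le> (linbr x / 2) powr r"
    using linbr_le_jbr[of x] jbr_pos linbr_pos False by (intro powr_mono2') auto
  also have "\<dots> = 2 powr \<bar>r\<bar> * linbr x powr r"
    using False linbr_pos[of x] by (simp add: powr_divide powr_minus divide_simps)
  finally show ?thesis .
qed

lemma powr_linbr_le_jbr: "linbr x powr r \<le> 2 powr \<bar>r\<bar> * jbr x powr r"
proof (cases "r \<ge> 0")
  case True
  have "linbr x powr r \<le> (2 * jbr x) powr r"
    using linbr_le_jbr[of x] linbr_pos[of x] True by (intro powr_mono2) auto
  also have "\<dots> = 2 powr \<bar>r\<bar> * jbr x powr r"
    using True jbr_pos[of x] by (simp add: powr_mult)
  finally show ?thesis .
next
  case False
  have "linbr x powr r \<le> jbr x powr r"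
    using jbr_le_linbr[of x] jbr_pos linbr_pos False by (intro powr_mono2') auto
  also have "\<dots> \<le> 2 powr \<bar>r\<bar> * jbr x powr r"
    using mult_right_mono[OF ge_one_powr_ge_zero[of 2 "\<bar>r\<bar>"], of "jbr x powr r"] by simp
  finally show ?thesis .
qed

lemma integrable_linbr_powr:
  fixes m :: real
  assumes m: "m > 1"
  shows "integrable lborel (\<lambda>x. linbr x powr (- m))"
proof -
  define h where "h t = indicator {0..} t * linbr t powr (- m)" for t
  have "h = (\<lambda>t. indicator {0..} t * (1 + t) powr (- m))"
    by (auto simp: fun_eq_iff h_def linbr_def split: split_indicator)
  then have "integrable lborel h"
    using has_bochner_integral_tail_powr[OF m order_refl] by (simp add: has_bochner_integral_iff)
  then have int: "integrable lborel (\<lambda>t. h t + h (- t))"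
    by (intro Bochner_Integration.integrable_add) (simp_all add: lborel_integrable_reflect_iff[of h])
  have "0 \<le> linbr t powr (- m) \<and> linbr t powr (- m) \<le> 1 * (h t + h (- t))" for t
    by (auto simp: h_def split: split_indicator)
  from integrable_le_scaled[OF _ int this] show ?thesis
    by simp
qed

lemma integrable_jbr_powr:
  fixes m :: real
  assumes m: "m > 1"
  shows "integrable lborel (\<lambda>x. jbr x powr (- m))"
  using integrable_le_scaled[OF _ integrable_linbr_powr[OF m] conjI[OF _ powr_jbr_le_linbr]]
  by simp

lemma jbr_weight_imp_linbr_weight:
  fixes u :: "real \<Rightarrow> real"
  assumes [measurable]: "u \<in> borel_measurable borel"
    and "integrable lborel (\<lambda>x. \<bar>u x\<bar> powr p * jbr x powr r)"
  shows "integrable lborel (\<lambda>x. \<bar>u x\<bar> powr p * linbr x powr r) \<and>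
    (\<integral>x. \<bar>u x\<bar> powr p * linbr x powr r \<partial>lborel) \<le> 2 powr \<bar>r\<bar> * (\<integral>x. \<bar>u x\<bar> powr p * jbr x powr r \<partial>lborel)"
  using assms
  by (intro integrable_le_scaled) (auto intro: order_trans[OF mult_left_mono[OF powr_linbr_le_jbr]])

lemma linbr_weight_imp_jbr_weight:
  fixes u :: "real \<Rightarrow> real"
  assumes [measurable]: "u \<in> borel_measurable borel"
    and "integrable lborel (\<lambda>x. \<bar>u x\<bar> powr p * linbr x powr r)"
  shows "integrable lborel (\<lambda>x. \<bar>u x\<bar> powr p * jbr x powr r) \<and>
    (\<integral>x. \<bar>u x\<bar> powr p * jbr x powr r \<partial>lborel) \<le> 2 powr \<bar>r\<bar> * (\<integral>x. \<bar>u x\<bar> powr p * linbr x powr r \<partial>lborel)"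
  using assms
  by (intro integrable_le_scaled) (auto intro: order_trans[OF mult_left_mono[OF powr_jbr_le_linbr]])

lemma abs_mult_jbr_powr:
  "\<bar>u * jbr x powr g\<bar> powr p = \<bar>u\<bar> powr p * jbr x powr (g * p)"
  using jbr_pos[of x] by (simp add: abs_mult powr_mult powr_powr)

lemma wLp_norm_nonneg: "wLp_norm p g u \<ge> 0"
  by (simp add: wLp_norm_def)

lemma wLp_norm_powr:
  assumes "p > 0"
  shows "wLp_norm p g u powr p = (\<integral>x. \<bar>u x * jbr x powr g\<bar> powr p \<partial>lborel)"
proof -
  have "(\<integral>x. \<bar>u x * jbr x powr g\<bar> powr p \<partial>lborel) \<ge> 0"
    by (intro integral_nonneg_AE) auto
  then show ?thesis
    using assms by (simp add: wLp_norm_def powr_powr)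
qed

lemma wLp_cmult:
  assumes p: "p > 0" and u: "wLp p g u"
  shows "wLp p g (\<lambda>x. c * u x) \<and> wLp_norm p g (\<lambda>x. c * u x) = \<bar>c\<bar> * wLp_norm p g u"
proof -
  have eq: "\<bar>c * u x * jbr x powr g\<bar> powr p = \<bar>c\<bar> powr p * \<bar>u x * jbr x powr g\<bar> powr p" for x
    by (simp add: abs_mult powr_mult)
  have [measurable]: "u \<in> borel_measurable borel"
    using u by (simp add: wLp_def)
  have "(\<integral>x. \<bar>u x * jbr x powr g\<bar> powr p \<partial>lborel) \<ge> 0"
    by (intro integral_nonneg_AE) auto
  then show ?thesis
    using u p by (simp add: wLp_def wLp_norm_def eq powr_mult powr_powr)
qed

lemma wLp_add:
  assumes p: "p \<ge> 1" and u: "wLp p g u" and v: "wLp p g v"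
  shows "wLp p g (\<lambda>x. u x + v x) \<and>
         wLp_norm p g (\<lambda>x. u x + v x) \<le> 4 * (wLp_norm p g u + wLp_norm p g v)"
proof -
  define F where "F u x = \<bar>u x * jbr x powr g\<bar> powr p" for u :: "real \<Rightarrow> real" and x
  have [measurable]: "u \<in> borel_measurable borel" "v \<in> borel_measurable borel"
    and int: "integrable lborel (F u)" "integrable lborel (F v)"
    using u v by (auto simp: wLp_def F_def[abs_def])
  have "F (\<lambda>x. u x + v x) x \<le> (\<bar>u x * jbr x powr g\<bar> + \<bar>v x * jbr x powr g\<bar>) powr p" for x
    unfolding F_def using p by (intro powr_mono2) (auto simp: distrib_right abs_triangle_ineq)
  also have "\<dots> x \<le> 2 powr p * (F u x + F v x)" for x
    unfolding F_def using p by (intro powr_add_le) auto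
  finally have "integrable lborel (F (\<lambda>x. u x + v x)) \<and>
      integral\<^sup>L lborel (F (\<lambda>x. u x + v x)) \<le> 2 powr p * (\<integral>x. F u x + F v x \<partial>lborel)"
  proof (intro integrable_le_scaled)
    show "F (\<lambda>x. u x + v x) \<in> borel_measurable lborel"
      unfolding F_def by measurable
  qed (use int in \<open>auto simp: F_def[abs_def]\<close>)
  then have sum: "wLp p g (\<lambda>x. u x + v x)"
    and le: "wLp_norm p g (\<lambda>x. u x + v x) powr p \<le> 2 powr p * (wLp_norm p g u powr p + wLp_norm p g v powr p)"
    using int p by (simp_all add: wLp_def wLp_norm_powr F_def[abs_def])
  have "wLp_norm p g (\<lambda>x. u x + v x)
      \<le> (2 powr p * (wLp_norm p g u powr p + wLp_norm p g v powr p)) powr (1/p)"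
    using powr_mono2[OF _ _ le, of "1/p"] p by (simp add: wLp_norm_nonneg powr_powr)
  also have "\<dots> = 2 * (wLp_norm p g u powr p + wLp_norm p g v powr p) powr (1/p)"
    using p by (simp add: powr_mult powr_powr)
  also have "(wLp_norm p g u powr p + wLp_norm p g v powr p) powr (1/p)
      \<le> 2 powr (1/p) * (wLp_norm p g u + wLp_norm p g v)"
    using powr_add_le[of "wLp_norm p g u powr p" "wLp_norm p g v powr p" "1/p"] p
    by (simp add: wLp_norm_nonneg powr_powr)
  also have "2 powr (1/p) \<le> 2 powr 1"
    using p by (intro powr_mono) auto
  finally show ?thesis
    using sum by (auto simp: wLp_norm_nonneg mult_right_mono)
qed

lemma wLp_imp_integrable:
  fixes p s :: real
  assumes p: "p > 1" and s: "s > 1 - 1/p"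
  shows "\<exists>K\<ge>0. \<forall>u. wLp p s u \<longrightarrow>
           integrable lborel u \<and> (\<integral>x. \<bar>u x\<bar> \<partial>lborel) \<le> K * wLp_norm p s u"
proof -
  define q where "q = p / (p - 1)"
  have q: "q > 1" "1/p + 1/q = 1"
    using p by (auto simp: q_def field_simps)
  have "s * q > (1 - 1/p) * q"
    using s q by (intro mult_strict_right_mono) auto
  then have sq: "s * q > 1"
    using p by (simp add: q_def field_simps)
  define K where "K = (\<integral>x. jbr x powr (- (s * q)) \<partial>lborel) powr (1/q)"
  show ?thesis
  proof (intro exI[of _ K] conjI allI impI)
    show "K \<ge> 0"
      by (simp add: K_def)
    fix u :: "real \<Rightarrow> real"
    assume "wLp p s u"
    then have [measurable]: "u \<in> borel_measurable borel"
      and int: "integrable lborel (\<lambda>x. (\<bar>u x\<bar> * jbr x powr s) powr p)"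
      by (auto simp: wLp_def abs_mult)
    have eq: "(jbr x powr (- s)) powr q = jbr x powr (- (s * q))"
             "\<bar>u x\<bar> * jbr x powr s * jbr x powr (- s) = \<bar>u x\<bar>" for x
      using jbr_pos[of x] by (simp_all add: powr_powr powr_add[symmetric] mult.assoc)
    have "integrable lborel (\<lambda>x. \<bar>u x\<bar> * jbr x powr s * jbr x powr (- s)) \<and>
        (\<integral>x. \<bar>u x\<bar> * jbr x powr s * jbr x powr (- s) \<partial>lborel)
          \<le> (\<integral>x. (\<bar>u x\<bar> * jbr x powr s) powr p \<partial>lborel) powr (1/p) * K"
      using Holder_inequality[OF p q, of "\<lambda>x. \<bar>u x\<bar> * jbr x powr s" lborel "\<lambda>x. jbr x powr (- s)"]
        int integrable_jbr_powr[OF sq]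
      by (simp add: eq K_def)
    then show "integrable lborel u" "(\<integral>x. \<bar>u x\<bar> \<partial>lborel) \<le> K * wLp_norm p s u"
      unfolding eq(2) by (simp_all add: integrable_abs_iff wLp_norm_def abs_mult mult.commute)
  qed
qed

section \<open>Hardy's inequality for primitives\<close>

definition tail_integral :: "(real \<Rightarrow> real) \<Rightarrow> real \<Rightarrow> real" where
  "tail_integral h x = (\<integral>t. indicator {x..} t * h t \<partial>lborel)"

lemma borel_measurable_tail_integral [measurable]:
  assumes [measurable]: "h \<in> borel_measurable borel"
  shows "tail_integral h \<in> borel_measurable borel"
proof -
  have "tail_integral h = (\<lambda>x. \<integral>t. (if x \<le> t then h t else 0) \<partial>lborel)"
    unfolding tail_integral_def
    by (intro ext Bochner_Integration.integral_cong) (auto split: split_indicator)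
  then show ?thesis
    by simp
qed

lemma tail_integral_Holder:
  fixes p a m x :: real and h :: "real \<Rightarrow> real"
  assumes p: "p > 1" and a: "a > 0" and m: "m = a * p / (p - 1)" "m > 1"
    and [measurable]: "h \<in> borel_measurable borel" and h: "\<And>t. h t \<ge> 0" and x: "x \<ge> 0"
    and int: "integrable lborel (\<lambda>t. indicator {x..} t * (h t powr p * (1 + t) powr (a * p)))"
  shows "tail_integral h x powr p \<le> (m - 1) powr (1 - p) * (1 + x) powr ((1 - m) * (p - 1)) *
           (\<integral>t. indicator {x..} t * (h t powr p * (1 + t) powr (a * p)) \<partial>lborel)"
proof -
  define q where "q = p / (p - 1)"
  have q: "q > 1" "1/p + 1/q = 1" "p / q = p - 1" "m = a * q"
    using p by (auto simp: q_def m field_simps)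
  define f where "f t = indicator {x..} t * (h t * (1 + t) powr a)" for t
  define g where "g t = indicator {x..} t * (1 + t) powr (- a)" for t
  define J where "J = (\<integral>t. indicator {x..} t * (h t powr p * (1 + t) powr (a * p)) \<partial>lborel)"
  define S where "S = (1 + x) powr (1 - m) / (m - 1)"
  have eq: "f t powr p = indicator {x..} t * (h t powr p * (1 + t) powr (a * p))"
       "g t powr q = indicator {x..} t * (1 + t) powr (- m)"
       "f t * g t = indicator {x..} t * h t" for t
    using x p q h[of t]
    by (auto simp: f_def g_def powr_mult powr_powr powr_add[symmetric] split: split_indicator)
  have [measurable]: "f \<in> borel_measurable borel" "g \<in> borel_measurable borel"
    unfolding f_def[abs_def] g_def[abs_def] by measurable
  have S: "has_bochner_integral lborel (\<lambda>t. indicator {x..} t * (1 + t) powr (- m)) S"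
    unfolding S_def by (rule has_bochner_integral_tail_powr[OF m(2) x])
  have "tail_integral h x \<le> J powr (1/p) * S powr (1/q)"
    using Holder_inequality[OF p q(1,2), of f lborel g] int S h
    unfolding eq has_bochner_integral_iff tail_integral_def J_def by (simp add: f_def g_def)
  moreover have "tail_integral h x \<ge> 0" "J \<ge> 0" "S > 0"
    using h m x by (auto simp: tail_integral_def J_def S_def intro!: integral_nonneg_AE)
  ultimately have "tail_integral h x powr p \<le> (J powr (1/p) * S powr (1/q)) powr p"
    using p by (intro powr_mono2) auto
  also have "\<dots> = J * S powr (p - 1)"
    using \<open>J \<ge> 0\<close> \<open>S > 0\<close> p q by (simp add: powr_mult powr_powr)
  also have "S powr (p - 1) = (1 + x) powr ((1 - m) * (p - 1)) * (m - 1) powr (1 - p)"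
    using x m(2) powr_minus_divide[of "m - 1" "p - 1"] by (simp add: S_def powr_divide powr_powr)
  finally show ?thesis
    by (simp add: J_def mult_ac)
qed

lemma nn_integral_powr_weighted_tail_le:
  fixes e :: real and k :: "real \<Rightarrow> real"
  assumes e: "e > -1" and [measurable]: "k \<in> borel_measurable borel" and k: "\<And>t. k t \<ge> 0"
  shows "(\<integral>\<^sup>+x. ennreal (indicator {0..} x * (1 + x) powr e) *
            (\<integral>\<^sup>+t. ennreal (indicator {x..} t * k t) \<partial>lborel) \<partial>lborel)
         \<le> (\<integral>\<^sup>+t. ennreal (indicator {0..} t * (k t * (1 + t) powr (e + 1)) / (e + 1)) \<partial>lborel)"
proof -
  define F where "F x t = ennreal (indicator {0..} x * (1 + x) powr e) * ennreal (indicator {x..} t * k t)"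
    for x t
  have "case_prod F = (\<lambda>(x, t). ennreal ((if 0 \<le> x then 1 else 0) * (1 + x) powr e) *
      ennreal ((if x \<le> t then 1 else 0) * k t))"
    by (auto simp: F_def fun_eq_iff split: split_indicator)
  then have F_measurable: "case_prod F \<in> borel_measurable (lborel \<Otimes>\<^sub>M lborel)"
    by simp
  have inner: "(\<integral>\<^sup>+x. F x t \<partial>lborel)
      \<le> ennreal (indicator {0..} t * (k t * (1 + t) powr (e + 1)) / (e + 1))" for t
  proof (cases "t \<ge> 0")
    case True
    have "F x t = ennreal (k t) * ennreal (indicator {0..t} x * (1 + x) powr e)" for x
      using k[of t] by (simp add: F_def ennreal_mult'[symmetric] split: split_indicator)
    then have "(\<integral>\<^sup>+x. F x t \<partial>lborel)
        = ennreal (k t) * (\<integral>\<^sup>+x. ennreal (indicator {0..t} x * (1 + x) powr e) \<partial>lborel)"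
      by (simp add: nn_integral_cmult)
    also have "\<dots> = ennreal (k t) * ennreal (((1 + t) powr (e + 1) - 1) / (e + 1))"
      using has_bochner_integral_powr_Icc[OF e order_refl True]
      by (subst nn_integral_eq_integral) (auto simp: has_bochner_integral_iff)
    also have "\<dots> \<le> ennreal (k t) * ennreal ((1 + t) powr (e + 1) / (e + 1))"
      using e by (intro mult_left_mono ennreal_leI divide_right_mono) auto
    finally show ?thesis
      using True k[of t] e by (simp add: ennreal_mult'[symmetric])
  next
    case False
    then have "F x t = 0" for x
      by (simp add: F_def split: split_indicator)
    then show ?thesis
      by simp
  qed
  have "(\<integral>\<^sup>+x. ennreal (indicator {0..} x * (1 + x) powr e) *
            (\<integral>\<^sup>+t. ennreal (indicator {x..} t * k t) \<partial>lborel) \<partial>lborel)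
      = (\<integral>\<^sup>+x. (\<integral>\<^sup>+t. F x t \<partial>lborel) \<partial>lborel)"
    unfolding F_def by (simp add: nn_integral_cmult)
  also have "\<dots> = (\<integral>\<^sup>+t. (\<integral>\<^sup>+x. F x t \<partial>lborel) \<partial>lborel)"
    by (rule lborel_pair.Fubini'[OF F_measurable, symmetric])
  also have "\<dots> \<le> (\<integral>\<^sup>+t. ennreal (indicator {0..} t * (k t * (1 + t) powr (e + 1)) / (e + 1)) \<partial>lborel)"
    by (intro nn_integral_mono inner)
  finally show ?thesis .
qed

lemma integral_powr_weighted_tail_le:
  fixes e c :: real and k H :: "real \<Rightarrow> real"
  assumes e: "e > -1" and c: "c \<ge> 0"
    and [measurable]: "k \<in> borel_measurable borel" "H \<in> borel_measurable borel" and k: "\<And>t. k t \<ge> 0"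
    and int: "integrable lborel (\<lambda>t. indicator {0..} t * (k t * (1 + t) powr (e + 1)))"
    and H: "\<And>x. 0 \<le> H x \<and> H x \<le> c * (indicator {0..} x * (1 + x) powr e * (\<integral>t. indicator {x..} t * k t \<partial>lborel))"
  shows "integrable lborel H \<and>
    integral\<^sup>L lborel H \<le> c / (e + 1) * (\<integral>t. indicator {0..} t * (k t * (1 + t) powr (e + 1)) \<partial>lborel)"
proof -
  define I where "I = (\<integral>t. indicator {0..} t * (k t * (1 + t) powr (e + 1)) \<partial>lborel)"
  have int_k: "integrable lborel (\<lambda>t. indicator {x..} t * k t)" if "x \<ge> 0" for x
  proof -
    have "0 \<le> indicator {x..} t * k t \<and>
        indicator {x..} t * k t \<le> 1 * (indicator {0..} t * (k t * (1 + t) powr (e + 1)))" for t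
      using that e k[of t] mult_left_mono[OF ge_one_powr_ge_zero[of "1 + t" "e + 1"] k[of t]]
      by (auto split: split_indicator)
    from integrable_le_scaled[OF _ int this] show ?thesis
      by simp
  qed
  have "(\<lambda>x. \<integral>\<^sup>+t. ennreal (indicator {x..} t * k t) \<partial>lborel)
      = (\<lambda>x. \<integral>\<^sup>+t. ennreal ((if x \<le> t then 1 else 0) * k t) \<partial>lborel)"
    by (intro ext nn_integral_cong) (simp split: split_indicator)
  then have [measurable]: "(\<lambda>x. \<integral>\<^sup>+t. ennreal (indicator {x..} t * k t) \<partial>lborel) \<in> borel_measurable borel"
    by simp measurable
  have "ennreal (H x) \<le> ennreal c * (ennreal (indicator {0..} x * (1 + x) powr e) *
      (\<integral>\<^sup>+t. ennreal (indicator {x..} t * k t) \<partial>lborel))" for x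
  proof (cases "x \<ge> 0")
    case True
    then have "(\<integral>\<^sup>+t. ennreal (indicator {x..} t * k t) \<partial>lborel) = ennreal (\<integral>t. indicator {x..} t * k t \<partial>lborel)"
      using int_k k by (intro nn_integral_eq_integral) auto
    then show ?thesis
      using H[of x] True c int_k[OF True] k
      by (simp add: ennreal_mult'[symmetric] integral_nonneg_AE ennreal_leI)
  next
    case False
    then show ?thesis
      using H[of x] by simp
  qed
  then have "(\<integral>\<^sup>+x. ennreal (H x) \<partial>lborel) \<le> ennreal c * (\<integral>\<^sup>+x. ennreal (indicator {0..} x * (1 + x) powr e) *
      (\<integral>\<^sup>+t. ennreal (indicator {x..} t * k t) \<partial>lborel) \<partial>lborel)"
    by (subst nn_integral_cmult[symmetric]) (auto intro!: nn_integral_mono)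
  also have "\<dots> \<le> ennreal c * (\<integral>\<^sup>+t. ennreal (indicator {0..} t * (k t * (1 + t) powr (e + 1)) / (e + 1)) \<partial>lborel)"
    by (intro mult_left_mono nn_integral_powr_weighted_tail_le e k) auto
  also have "\<dots> = ennreal (c / (e + 1) * I)"
    using int e c k
    by (subst nn_integral_eq_integral) (auto simp: I_def ennreal_mult'[symmetric] integral_nonneg_AE)
  moreover have "I \<ge> 0"
    using k by (auto simp: I_def intro!: integral_nonneg_AE)
  ultimately show ?thesis
    using c e H by (intro integrable_nn_integral_le) (auto simp: I_def)
qed

(* Any a strictly between 1 - 1/p and 1 + \<beta> works for the Hoelder splitting of the tail
   integral in Hardy_inequality_tail; we take the midpoint. *)
lemma Hardy_exponents:
  fixes p \<beta> :: real
  assumes p: "p > 1" and \<beta>: "\<beta> > -1/p"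
  shows "\<exists>a m e. a > 0 \<and> a < 1 + \<beta> \<and> m = a * p / (p - 1) \<and> m > 1 \<and>
           e = (1 - m) * (p - 1) + \<beta> * p \<and> e > -1 \<and> a * p + (e + 1) = (\<beta> + 1) * p"
proof (intro exI conjI)
  define a where "a = (2 - 1/p + \<beta>) / 2"
  have "1/p < 1" "\<beta> > - (1/p)"
    using p \<beta> by auto
  then show a: "a > 0" "a < 1 + \<beta>"
    by (auto simp: a_def)
  have "a > 1 - 1/p"
    using \<open>1/p < 1\<close> \<open>\<beta> > - (1/p)\<close> by (simp add: a_def)
  then have "a * p / (p - 1) > (1 - 1/p) * p / (p - 1)"
    using p by (intro divide_strict_right_mono mult_strict_right_mono) auto
  then show "a * p / (p - 1) > 1"
    using p by (simp add: field_simps)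
  have "a * p / (p - 1) * (p - 1) = a * p"
    using p by simp
  then show "a * p + ((1 - a * p / (p - 1)) * (p - 1) + \<beta> * p + 1) = (\<beta> + 1) * p"
    by (simp add: algebra_simps)
  moreover have "p * (1 + \<beta> - a) > 0"
    using a p by simp
  ultimately show "(1 - a * p / (p - 1)) * (p - 1) + \<beta> * p > -1"
    by (simp add: algebra_simps)
qed simp_all

(* Hoelder on every tail with the weight (1 + t)^a (tail_integral_Holder), then Tonelli. *)
lemma Hardy_inequality_tail:
  fixes p \<beta> :: real
  assumes p: "p > 1" and \<beta>: "\<beta> > -1/p"
  shows "\<exists>C>0. \<forall>h. h \<in> borel_measurable borel \<longrightarrow> (\<forall>t. h t \<ge> 0) \<longrightarrow>
     integrable lborel (\<lambda>t. indicator {0..} t * (h t powr p * (1 + t) powr ((\<beta> + 1) * p))) \<longrightarrow>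
     integrable lborel (\<lambda>x. indicator {0..} x * (tail_integral h x powr p * (1 + x) powr (\<beta> * p))) \<and>
     (\<integral>x. indicator {0..} x * (tail_integral h x powr p * (1 + x) powr (\<beta> * p)) \<partial>lborel)
       \<le> C * (\<integral>t. indicator {0..} t * (h t powr p * (1 + t) powr ((\<beta> + 1) * p)) \<partial>lborel)"
proof -
  obtain a m e where a: "a > 0" and a_lt: "a < 1 + \<beta>" and m_def: "m = a * p / (p - 1)" and m: "m > 1"
    and e_def: "e = (1 - m) * (p - 1) + \<beta> * p" and "e > -1" and e: "a * p + (e + 1) = (\<beta> + 1) * p"
    using Hardy_exponents[OF p \<beta>] by blast
  define c0 where "c0 = (m - 1) powr (1 - p)"
  have "c0 > 0"
    using m by (simp add: c0_def)
  show ?thesis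
  proof (intro exI[of _ "c0 / (e + 1)"] conjI allI impI)
    show "c0 / (e + 1) > 0"
      using \<open>c0 > 0\<close> \<open>e > -1\<close> by simp
    fix h :: "real \<Rightarrow> real"
    assume [measurable]: "h \<in> borel_measurable borel" and h: "\<forall>t. h t \<ge> 0"
      and int: "integrable lborel (\<lambda>t. indicator {0..} t * (h t powr p * (1 + t) powr ((\<beta> + 1) * p)))"
    define k where "k t = h t powr p * (1 + t) powr (a * p)" for t
    have [measurable]: "k \<in> borel_measurable borel"
      unfolding k_def[abs_def] by measurable
    have k_weight: "indicator {0..} t * (k t * (1 + t) powr (e + 1))
        = indicator {0..} t * (h t powr p * (1 + t) powr ((\<beta> + 1) * p))" for t
      using e by (auto simp: k_def powr_add[symmetric] split: split_indicator)
    have int_k: "integrable lborel (\<lambda>t. indicator {x..} t * k t)" if "x \<ge> 0" for x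
    proof -
      have "0 \<le> indicator {x..} t * k t \<and>
          indicator {x..} t * k t \<le> 1 * (indicator {0..} t * (h t powr p * (1 + t) powr ((\<beta> + 1) * p)))" for t
        using that a_lt p by (auto simp: k_def split: split_indicator intro!: mult_left_mono powr_mono)
      from integrable_le_scaled[OF _ int this] show ?thesis
        by simp
    qed
    have "0 \<le> indicator {0..} x * (tail_integral h x powr p * (1 + x) powr (\<beta> * p)) \<and>
        indicator {0..} x * (tail_integral h x powr p * (1 + x) powr (\<beta> * p))
          \<le> c0 * (indicator {0..} x * (1 + x) powr e * (\<integral>t. indicator {x..} t * k t \<partial>lborel))" for x
    proof (cases "x \<ge> 0")
      case True
      have "tail_integral h x powr p * (1 + x) powr (\<beta> * p)
          \<le> c0 * (1 + x) powr ((1 - m) * (p - 1)) * (\<integral>t. indicator {x..} t * k t \<partial>lborel) * (1 + x) powr (\<beta> * p)"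
        using tail_integral_Holder[OF p a(1) m_def m _ _ True int_k[OF True, unfolded k_def]] h
        by (intro mult_right_mono) (auto simp: c0_def k_def)
      also have "\<dots> = c0 * ((1 + x) powr e * (\<integral>t. indicator {x..} t * k t \<partial>lborel))"
        using True by (simp add: e_def powr_add[symmetric] algebra_simps)
      finally show ?thesis
        using True by simp
    qed simp
    moreover have "integrable lborel (\<lambda>t. indicator {0..} t * (k t * (1 + t) powr (e + 1)))"
      using int by (simp only: k_weight)
    ultimately have "integrable lborel (\<lambda>x. indicator {0..} x * (tail_integral h x powr p * (1 + x) powr (\<beta> * p))) \<and>
      (\<integral>x. indicator {0..} x * (tail_integral h x powr p * (1 + x) powr (\<beta> * p)) \<partial>lborel)
         \<le> c0 / (e + 1) * (\<integral>t. indicator {0..} t * (k t * (1 + t) powr (e + 1)) \<partial>lborel)"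
      using \<open>c0 > 0\<close> h \<open>e > -1\<close>
      by (intro integral_powr_weighted_tail_le) (auto simp: k_def)
    then show "integrable lborel (\<lambda>x. indicator {0..} x * (tail_integral h x powr p * (1 + x) powr (\<beta> * p)))"
      "(\<integral>x. indicator {0..} x * (tail_integral h x powr p * (1 + x) powr (\<beta> * p)) \<partial>lborel)
         \<le> c0 / (e + 1) * (\<integral>t. indicator {0..} t * (h t powr p * (1 + t) powr ((\<beta> + 1) * p)) \<partial>lborel)"
      unfolding k_weight by auto
  qed
qed

definition primitive :: "(real \<Rightarrow> real) \<Rightarrow> real \<Rightarrow> real" where
  "primitive g x = (\<integral>t. indicator {..x} t * g t \<partial>lborel)"

lemma borel_measurable_primitive [measurable]:
  assumes [measurable]: "g \<in> borel_measurable borel"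
  shows "primitive g \<in> borel_measurable borel"
proof -
  have "primitive g = (\<lambda>x. \<integral>t. (if t \<le> x then g t else 0) \<partial>lborel)"
    unfolding primitive_def
    by (intro ext Bochner_Integration.integral_cong) (auto split: split_indicator)
  then show ?thesis
    by simp
qed

lemma primitive_add_integral_greaterThan:
  fixes g :: "real \<Rightarrow> real"
  assumes "integrable lborel g"
  shows "primitive g x + (\<integral>t. indicator {x<..} t * g t \<partial>lborel) = (\<integral>t. g t \<partial>lborel)"
proof -
  have "primitive g x + (\<integral>t. indicator {x<..} t * g t \<partial>lborel)
      = (\<integral>t. indicator {..x} t * g t + indicator {x<..} t * g t \<partial>lborel)"
    unfolding primitive_def using assms
    by (intro Bochner_Integration.integral_add[symmetric] integrable_indicator_mult) auto
  also have "\<dots> = (\<integral>t. g t \<partial>lborel)"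
    by (intro Bochner_Integration.integral_cong) (auto split: split_indicator)
  finally show ?thesis .
qed

lemma abs_primitive_le_tail_integral:
  fixes g :: "real \<Rightarrow> real"
  assumes g: "integrable lborel g" and mean: "(\<integral>t. g t \<partial>lborel) = 0"
  shows "x \<ge> 0 \<Longrightarrow> \<bar>primitive g x\<bar> \<le> tail_integral (\<lambda>t. \<bar>g t\<bar>) x"
    and "\<bar>primitive g x\<bar> \<le> tail_integral (\<lambda>t. \<bar>g (- t)\<bar>) (- x)"
proof -
  have int: "integrable lborel (\<lambda>t. indicator A t * \<bar>g t\<bar>)" if "A \<in> sets borel" for A
    using that g by (intro integrable_indicator_mult) auto
  have "\<bar>primitive g x\<bar> = \<bar>\<integral>t. indicator {x<..} t * g t \<partial>lborel\<bar>"
    using primitive_add_integral_greaterThan[OF g, of x] mean by simp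
  also have "\<dots> \<le> (\<integral>t. indicator {x<..} t * \<bar>g t\<bar> \<partial>lborel)"
    using integral_abs_bound[of lborel "\<lambda>t. indicator {x<..} t * g t"] by (simp add: abs_mult)
  also have "\<dots> \<le> tail_integral (\<lambda>t. \<bar>g t\<bar>) x"
    unfolding tail_integral_def by (intro integral_mono int) (auto split: split_indicator)
  finally show "x \<ge> 0 \<Longrightarrow> \<bar>primitive g x\<bar> \<le> tail_integral (\<lambda>t. \<bar>g t\<bar>) x" .
  have "\<bar>primitive g x\<bar> \<le> (\<integral>t. indicator {..x} t * \<bar>g t\<bar> \<partial>lborel)"
    unfolding primitive_def
    using integral_abs_bound[of lborel "\<lambda>t. indicator {..x} t * g t"] by (simp add: abs_mult)
  also have "\<dots> = (\<integral>t. indicator {..x} (- t) * \<bar>g (- t)\<bar> \<partial>lborel)"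
    by (rule lborel_integral_reflect[symmetric])
  also have "\<dots> = tail_integral (\<lambda>t. \<bar>g (- t)\<bar>) (- x)"
    unfolding tail_integral_def by (intro Bochner_Integration.integral_cong) (auto split: split_indicator)
  finally show "\<bar>primitive g x\<bar> \<le> tail_integral (\<lambda>t. \<bar>g (- t)\<bar>) (- x)" .
qed

lemma Hardy_inequality_tail_linbr:
  fixes p \<beta> :: real
  assumes p: "p > 1" and \<beta>: "\<beta> > -1/p"
  shows "\<exists>C\<ge>0. \<forall>h. h \<in> borel_measurable borel \<longrightarrow> (\<forall>t. h t \<ge> 0) \<longrightarrow>
     integrable lborel (\<lambda>t. h t powr p * linbr t powr ((\<beta> + 1) * p)) \<longrightarrow>
     integrable lborel (\<lambda>x. indicator {0..} x * (tail_integral h x powr p * linbr x powr (\<beta> * p))) \<and>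
     (\<integral>x. indicator {0..} x * (tail_integral h x powr p * linbr x powr (\<beta> * p)) \<partial>lborel)
       \<le> C * (\<integral>t. h t powr p * linbr t powr ((\<beta> + 1) * p) \<partial>lborel)"
proof -
  obtain C where "C > 0" and tail: "\<And>h. h \<in> borel_measurable borel \<Longrightarrow> \<forall>t. h t \<ge> 0 \<Longrightarrow>
     integrable lborel (\<lambda>t. indicator {0..} t * (h t powr p * (1 + t) powr ((\<beta> + 1) * p))) \<Longrightarrow>
     integrable lborel (\<lambda>x. indicator {0..} x * (tail_integral h x powr p * (1 + x) powr (\<beta> * p))) \<and>
     (\<integral>x. indicator {0..} x * (tail_integral h x powr p * (1 + x) powr (\<beta> * p)) \<partial>lborel)
       \<le> C * (\<integral>t. indicator {0..} t * (h t powr p * (1 + t) powr ((\<beta> + 1) * p)) \<partial>lborel)"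
    using Hardy_inequality_tail[OF p \<beta>] by blast
  have on_halfline: "(\<lambda>x. indicator {0..} x * (f x * (1 + x) powr r)) = (\<lambda>x. indicator {0..} x * (f x * linbr x powr r))"
    for f :: "real \<Rightarrow> real" and r
    by (simp add: fun_eq_iff linbr_def split: split_indicator)
  show ?thesis
  proof (intro exI[of _ C] conjI allI impI)
    show "C \<ge> 0"
      using \<open>C > 0\<close> by simp
    fix h :: "real \<Rightarrow> real"
    assume [measurable]: "h \<in> borel_measurable borel" and h: "\<forall>t. h t \<ge> 0"
      and int: "integrable lborel (\<lambda>t. h t powr p * linbr t powr ((\<beta> + 1) * p))"
    have "0 \<le> indicator {0..} t * (h t powr p * linbr t powr ((\<beta> + 1) * p)) \<and>
        indicator {0..} t * (h t powr p * linbr t powr ((\<beta> + 1) * p)) \<le> 1 * (h t powr p * linbr t powr ((\<beta> + 1) * p))"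
      for t by (simp split: split_indicator)
    from integrable_le_scaled[OF _ int this] tail[of h, unfolded on_halfline] h \<open>C > 0\<close>
    show "integrable lborel (\<lambda>x. indicator {0..} x * (tail_integral h x powr p * linbr x powr (\<beta> * p)))"
      "(\<integral>x. indicator {0..} x * (tail_integral h x powr p * linbr x powr (\<beta> * p)) \<partial>lborel)
         \<le> C * (\<integral>t. h t powr p * linbr t powr ((\<beta> + 1) * p) \<partial>lborel)"
      by (auto intro: order_trans mult_left_mono)
  qed
qed

lemma Hardy_inequality_primitive:
  fixes p \<beta> :: real
  assumes p: "p > 1" and \<beta>: "\<beta> > -1/p"
  shows "\<exists>C\<ge>0. \<forall>g. g \<in> borel_measurable borel \<longrightarrow> integrable lborel g \<longrightarrow> (\<integral>t. g t \<partial>lborel) = 0 \<longrightarrow>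
     integrable lborel (\<lambda>t. \<bar>g t\<bar> powr p * linbr t powr ((\<beta> + 1) * p)) \<longrightarrow>
     integrable lborel (\<lambda>x. \<bar>primitive g x\<bar> powr p * linbr x powr (\<beta> * p)) \<and>
     (\<integral>x. \<bar>primitive g x\<bar> powr p * linbr x powr (\<beta> * p) \<partial>lborel)
       \<le> C * (\<integral>t. \<bar>g t\<bar> powr p * linbr t powr ((\<beta> + 1) * p) \<partial>lborel)"
proof -
  define R where "R h x = indicator {0..} x * (tail_integral h x powr p * linbr x powr (\<beta> * p))"
    for h :: "real \<Rightarrow> real" and x
  obtain C where "C \<ge> 0" and tail: "\<And>h. h \<in> borel_measurable borel \<Longrightarrow> \<forall>t. h t \<ge> 0 \<Longrightarrow>
     integrable lborel (\<lambda>t. h t powr p * linbr t powr ((\<beta> + 1) * p)) \<Longrightarrow>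
     integrable lborel (R h) \<and> integral\<^sup>L lborel (R h) \<le> C * (\<integral>t. h t powr p * linbr t powr ((\<beta> + 1) * p) \<partial>lborel)"
    unfolding R_def using Hardy_inequality_tail_linbr[OF p \<beta>] by blast
  show ?thesis
  proof (intro exI[of _ "2 * C"] conjI allI impI)
    show "2 * C \<ge> 0"
      using \<open>C \<ge> 0\<close> by simp
    fix g :: "real \<Rightarrow> real"
    assume [measurable]: "g \<in> borel_measurable borel" and g: "integrable lborel g"
      and mean: "(\<integral>t. g t \<partial>lborel) = 0"
      and int: "integrable lborel (\<lambda>t. \<bar>g t\<bar> powr p * linbr t powr ((\<beta> + 1) * p))"
    have int_reflect: "integrable lborel (\<lambda>t. \<bar>g (- t)\<bar> powr p * linbr t powr ((\<beta> + 1) * p))"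
      using int lborel_integrable_reflect_iff[of "\<lambda>t. \<bar>g t\<bar> powr p * linbr t powr ((\<beta> + 1) * p)"]
      by simp
    from tail[of "\<lambda>t. \<bar>g t\<bar>"] tail[of "\<lambda>t. \<bar>g (- t)\<bar>"] int int_reflect
    have "integrable lborel (R (\<lambda>t. \<bar>g t\<bar>))" "integrable lborel (R (\<lambda>t. \<bar>g (- t)\<bar>))"
      "integral\<^sup>L lborel (R (\<lambda>t. \<bar>g t\<bar>)) + integral\<^sup>L lborel (R (\<lambda>t. \<bar>g (- t)\<bar>))
         \<le> 2 * C * (\<integral>t. \<bar>g t\<bar> powr p * linbr t powr ((\<beta> + 1) * p) \<partial>lborel)"
      using lborel_integral_reflect[of "\<lambda>t. \<bar>g t\<bar> powr p * linbr t powr ((\<beta> + 1) * p)"] by auto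
    then have RL: "integrable lborel (\<lambda>x. R (\<lambda>t. \<bar>g t\<bar>) x + R (\<lambda>t. \<bar>g (- t)\<bar>) (- x))"
      "(\<integral>x. R (\<lambda>t. \<bar>g t\<bar>) x + R (\<lambda>t. \<bar>g (- t)\<bar>) (- x) \<partial>lborel)
         \<le> 2 * C * (\<integral>t. \<bar>g t\<bar> powr p * linbr t powr ((\<beta> + 1) * p) \<partial>lborel)"
      by (auto simp: lborel_integrable_reflect_iff[of "R (\<lambda>t. \<bar>g (- t)\<bar>)"]
          lborel_integral_reflect[of "R (\<lambda>t. \<bar>g (- t)\<bar>)"])
    have pointwise: "0 \<le> \<bar>primitive g x\<bar> powr p * linbr x powr (\<beta> * p) \<and>
        \<bar>primitive g x\<bar> powr p * linbr x powr (\<beta> * p) \<le> 1 * (R (\<lambda>t. \<bar>g t\<bar>) x + R (\<lambda>t. \<bar>g (- t)\<bar>) (- x))" for x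
    proof (cases "x \<ge> 0")
      case True
      then show ?thesis
        using abs_primitive_le_tail_integral(1)[OF g mean True] p
        by (auto simp: R_def intro!: add_increasing2 mult_right_mono powr_mono2
            tail_integral_def integral_nonneg_AE)
    next
      case False
      then show ?thesis
        using abs_primitive_le_tail_integral(2)[OF g mean, of x] p
        by (auto simp: R_def intro!: add_increasing mult_right_mono powr_mono2)
    qed
    have "(\<lambda>x. \<bar>primitive g x\<bar> powr p * linbr x powr (\<beta> * p)) \<in> borel_measurable lborel"
      by measurable
    from integrable_le_scaled[OF this RL(1) pointwise] RL(2)
    show "integrable lborel (\<lambda>x. \<bar>primitive g x\<bar> powr p * linbr x powr (\<beta> * p))"
      "(\<integral>x. \<bar>primitive g x\<bar> powr p * linbr x powr (\<beta> * p) \<partial>lborel)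
          \<le> 2 * C * (\<integral>t. \<bar>g t\<bar> powr p * linbr t powr ((\<beta> + 1) * p) \<partial>lborel)"
      by simp_all
  qed
qed

lemma Hardy_inequality_primitive_wLp:
  fixes p \<beta> :: real
  assumes p: "p > 1" and \<beta>: "\<beta> > -1/p"
  shows "\<exists>C\<ge>0. \<forall>g. wLp p (\<beta> + 1) g \<longrightarrow> (\<integral>t. g t \<partial>lborel) = 0 \<longrightarrow>
     wLp p \<beta> (primitive g) \<and> wLp_norm p \<beta> (primitive g) \<le> C * wLp_norm p (\<beta> + 1) g"
proof -
  obtain C where "C \<ge> 0" and hardy: "\<And>g. g \<in> borel_measurable borel \<Longrightarrow> integrable lborel g \<Longrightarrow>
     (\<integral>t. g t \<partial>lborel) = 0 \<Longrightarrow>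
     integrable lborel (\<lambda>t. \<bar>g t\<bar> powr p * linbr t powr ((\<beta> + 1) * p)) \<Longrightarrow>
     integrable lborel (\<lambda>x. \<bar>primitive g x\<bar> powr p * linbr x powr (\<beta> * p)) \<and>
     (\<integral>x. \<bar>primitive g x\<bar> powr p * linbr x powr (\<beta> * p) \<partial>lborel)
       \<le> C * (\<integral>t. \<bar>g t\<bar> powr p * linbr t powr ((\<beta> + 1) * p) \<partial>lborel)"
    using Hardy_inequality_primitive[OF p \<beta>] by blast
  have "\<beta> + 1 > 1 - 1/p"
    using \<beta> by simp
  then have L1: "\<And>u. wLp p (\<beta> + 1) u \<Longrightarrow> integrable lborel u"
    using wLp_imp_integrable[OF p] by blast
  define c where "c = 2 powr \<bar>\<beta> * p\<bar> * (C * 2 powr \<bar>(\<beta> + 1) * p\<bar>)"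
  show ?thesis
  proof (intro exI[of _ "c powr (1/p)"] allI impI conjI)
    show "c powr (1/p) \<ge> 0"
      by simp
    fix g :: "real \<Rightarrow> real"
    assume g: "wLp p (\<beta> + 1) g" and mean: "(\<integral>t. g t \<partial>lborel) = 0"
    then have [measurable]: "g \<in> borel_measurable borel"
      and "integrable lborel (\<lambda>t. \<bar>g t\<bar> powr p * jbr t powr ((\<beta> + 1) * p))"
      by (simp_all add: wLp_def abs_mult_jbr_powr)
    from jbr_weight_imp_linbr_weight[OF _ this(2)]
    have g_linbr: "integrable lborel (\<lambda>t. \<bar>g t\<bar> powr p * linbr t powr ((\<beta> + 1) * p))"
      "(\<integral>t. \<bar>g t\<bar> powr p * linbr t powr ((\<beta> + 1) * p) \<partial>lborel)
         \<le> 2 powr \<bar>(\<beta> + 1) * p\<bar> * wLp_norm p (\<beta> + 1) g powr p"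
      using p by (simp_all add: wLp_norm_powr abs_mult_jbr_powr)
    from hardy[OF _ L1[OF g] mean g_linbr(1)]
    have "integrable lborel (\<lambda>x. \<bar>primitive g x\<bar> powr p * linbr x powr (\<beta> * p))"
      and P_linbr: "(\<integral>x. \<bar>primitive g x\<bar> powr p * linbr x powr (\<beta> * p) \<partial>lborel)
         \<le> C * (\<integral>t. \<bar>g t\<bar> powr p * linbr t powr ((\<beta> + 1) * p) \<partial>lborel)"
      by auto
    from linbr_weight_imp_jbr_weight[OF _ this(1)]
    have P_jbr: "integrable lborel (\<lambda>x. \<bar>primitive g x\<bar> powr p * jbr x powr (\<beta> * p))"
      "wLp_norm p \<beta> (primitive g) powr p
         \<le> 2 powr \<bar>\<beta> * p\<bar> * (\<integral>x. \<bar>primitive g x\<bar> powr p * linbr x powr (\<beta> * p) \<partial>lborel)"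
      using p by (simp_all add: wLp_norm_powr abs_mult_jbr_powr)
    then show "wLp p \<beta> (primitive g)"
      by (simp add: wLp_def abs_mult_jbr_powr)
    have "wLp_norm p \<beta> (primitive g) powr p \<le> c * wLp_norm p (\<beta> + 1) g powr p"
      using P_jbr(2) P_linbr g_linbr(2) \<open>C \<ge> 0\<close> unfolding c_def
      by (smt (verit) mult_left_mono mult.assoc powr_ge_zero)
    then show "wLp_norm p \<beta> (primitive g) \<le> c powr (1/p) * wLp_norm p (\<beta> + 1) g"
      using p \<open>C \<ge> 0\<close> by (intro powr_le_imp_le_powr_mult) (auto simp: c_def wLp_norm_nonneg)
  qed
qed

(* Since \<integral> g = 0, primitive g x is the integral of the kernel k t x below over t, and
   \<integral> |k t x| dx = |t g t| makes Fubini applicable. *)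
lemma integral_primitive:
  fixes g :: "real \<Rightarrow> real"
  assumes [measurable]: "g \<in> borel_measurable borel" and g: "integrable lborel g"
    and tg: "integrable lborel (\<lambda>t. t * g t)" and mean: "(\<integral>t. g t \<partial>lborel) = 0"
  shows "integrable lborel (primitive g) \<and> (\<integral>x. primitive g x \<partial>lborel) = - (\<integral>t. t * g t \<partial>lborel)"
proof -
  define k where "k t x = g t * (indicator {t..<0} x - indicator {0..<t} x)" for t x :: real
  have "case_prod k = (\<lambda>(t, x). g t * ((if t \<le> x \<and> x < 0 then 1 else 0) - (if 0 \<le> x \<and> x < t then 1 else 0)))"
    by (auto simp: k_def fun_eq_iff split: split_indicator)
  then have k_measurable: "case_prod k \<in> borel_measurable (lborel \<Otimes>\<^sub>M lborel)"
    by simp measurable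
  have k_eq: "k t = (\<lambda>x. - (t * g t) * (indicator {min t 0..<max t 0} x / \<bar>t\<bar>))"
    if "t \<noteq> 0" for t
    using that by (auto simp: k_def fun_eq_iff split: split_indicator)
  have inner: "integrable lborel (k t) \<and> (\<integral>x. k t x \<partial>lborel) = - (t * g t) \<and>
      (\<integral>x. norm (k t x) \<partial>lborel) = \<bar>t * g t\<bar>" for t
  proof (cases "t = 0")
    case False
    then show ?thesis
      by (auto simp: k_eq abs_mult min_def max_def)
  qed (simp add: k_def[abs_def])
  have k_integrable: "integrable (lborel \<Otimes>\<^sub>M lborel) (case_prod k)"
    using k_measurable inner tg by (intro lborel_pair.Fubini_integrable) auto
  have primitive_eq: "primitive g x = (\<integral>t. k t x \<partial>lborel)" for x
  proof -
    have "primitive g x = (\<integral>t. indicator {..x} t * g t - indicator {0..} x * g t \<partial>lborel)"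
      unfolding primitive_def using g mean by (simp add: integrable_indicator_mult)
    also have "\<dots> = (\<integral>t. k t x \<partial>lborel)"
      by (intro Bochner_Integration.integral_cong) (auto simp: k_def split: split_indicator)
    finally show ?thesis .
  qed
  have "integrable lborel (primitive g)"
    unfolding primitive_eq[abs_def] by (rule lborel_pair.integrable_snd[OF k_integrable])
  moreover have "(\<integral>x. primitive g x \<partial>lborel) = - (\<integral>t. t * g t \<partial>lborel)"
    unfolding primitive_eq lborel_pair.Fubini_integral[OF k_integrable] using inner by simp
  ultimately show ?thesis ..
qed

lemma primitive_diff:
  fixes g :: "real \<Rightarrow> real"
  assumes g: "integrable lborel g"
  shows "primitive g y - primitive g x = (LBINT t=ereal x..ereal y. g t)"
proof -
  have diff: "primitive g y - primitive g x = (LBINT t=ereal x..ereal y. g t)" if "x \<le> y" for x y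
  proof -
    have "primitive g y - primitive g x = (\<integral>t. indicator {..y} t * g t - indicator {..x} t * g t \<partial>lborel)"
      unfolding primitive_def using g by (simp add: integrable_indicator_mult)
    also have "\<dots> = (LBINT t:{x<..y}. g t)"
      using that unfolding set_lebesgue_integral_def
      by (intro Bochner_Integration.integral_cong) (auto split: split_indicator)
    also have "\<dots> = (LBINT t=ereal x..ereal y. g t)"
      using that by (simp add: interval_integral_Ioc)
    finally show ?thesis .
  qed
  show ?thesis
  proof (cases "x \<le> y")
    case False
    then show ?thesis
      using diff[of y x] by (subst interval_integral_endpoints_reverse) auto
  qed (rule diff)
qed

lemma continuous_on_primitive:
  fixes g :: "real \<Rightarrow> real"
  assumes g: "integrable lborel g"
  shows "continuous_on UNIV (primitive g)"
proof -
  have "isCont (primitive g) x" for x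
  proof -
    have "set_integrable lborel {x - 1..x + 1} g"
      using g by (simp add: set_integrable_def integrable_indicator_mult)
    then have g_on: "g integrable_on {x - 1..x + 1}"
      using set_borel_integral_eq_integral(1) by blast
    have eq: "primitive g (x - 1) + integral {x - 1..y} g = primitive g y" if "y \<in> {x - 1..x + 1}" for y
      using that primitive_diff[OF g, where x = "x - 1" and y = y] interval_integral_eq_integral[of "x - 1" y g]
        set_integrable_subset[OF \<open>set_integrable lborel {x - 1..x + 1} g\<close>, of "{x - 1..y}"]
      by auto
    have "continuous_on {x - 1..x + 1} (\<lambda>y. primitive g (x - 1) + integral {x - 1..y} g)"
      by (intro continuous_intros indefinite_integral_continuous_1 g_on)
    then have "continuous_on {x - 1..x + 1} (primitive g)"
      by (rule continuous_on_eq) (rule eq)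
    then show ?thesis
      by (rule continuous_on_interior) simp
  qed
  then show ?thesis
    by (simp add: continuous_on_eq_continuous_at)
qed

lemma has_real_derivative_primitive:
  fixes g :: "real \<Rightarrow> real"
  assumes g: "integrable lborel g" and cont: "continuous_on UNIV g"
  shows "(primitive g has_real_derivative g x) (at x)"
proof -
  define a b where "a = x - 1" and "b = x + 1"
  have x: "x \<in> {a..b}"
    by (simp add: a_def b_def)
  have "((\<lambda>u. LBINT y=a..u. g y) has_vector_derivative g x) (at x within {a..b})"
    using x by (intro interval_integral_FTC2 continuous_on_subset[OF cont]) auto
  then have "((\<lambda>u. primitive g a + (LBINT y=a..u. g y)) has_vector_derivative g x) (at x within {a..b})"
    by (intro derivative_eq_intros) auto
  then have "(primitive g has_vector_derivative g x) (at x within {a..b})"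
  proof (rule has_vector_derivative_transform[rotated 2])
    fix y
    show "primitive g y = primitive g a + (LBINT y=a..y. g y)"
      using primitive_diff[OF g, where x = a and y = y] by simp
  qed (rule x)
  then have "(primitive g has_vector_derivative g x) (at x within {a<..<b})"
    by (rule has_vector_derivative_within_subset) auto
  then have "(primitive g has_vector_derivative g x) (at x)"
    by (subst (asm) has_vector_derivative_within_open) (auto simp: a_def b_def)
  then show ?thesis
    by (simp add: has_real_derivative_iff_has_vector_derivative)
qed

section \<open>Exponential decay and the profile tanh\<close>

lemma linbr_powr_le_exp: "\<exists>C. \<forall>x. linbr x powr r \<le> C * exp \<bar>x\<bar>"
proof -
  define n where "n = max 1 (nat \<lceil>r\<rceil>)"
  have "n > 0" "r \<le> real n"
    unfolding n_def by linarith+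
  have "linbr x powr r \<le> real n ^ n * exp \<bar>x\<bar>" for x
  proof -
    have "linbr x powr r \<le> linbr x powr real n"
      using \<open>r \<le> real n\<close> linbr_ge_1[of x] by (intro powr_mono) auto
    also have "\<dots> = (1 + \<bar>x\<bar>) ^ n"
      using linbr_pos[of x] by (simp add: powr_realpow linbr_def)
    also have "\<dots> \<le> (real n * (1 + \<bar>x\<bar> / real n)) ^ n"
      using \<open>n > 0\<close> by (intro power_mono) (auto simp: field_simps)
    also have "\<dots> = real n ^ n * (1 + \<bar>x\<bar> / real n) ^ n"
      by (simp add: power_mult_distrib)
    also have "(1 + \<bar>x\<bar> / real n) ^ n \<le> exp \<bar>x\<bar>"
      using \<open>n > 0\<close> by (intro exp_ge_one_plus_x_over_n_power_n) auto
    finally show ?thesis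
      by (simp add: mult_left_mono)
  qed
  then show ?thesis
    by blast
qed

lemma integrable_linbr_powr_exp: "integrable lborel (\<lambda>x. linbr x powr r * exp (- \<bar>x\<bar>))"
proof -
  obtain C where C: "\<And>x. linbr x powr (r + 2) \<le> C * exp \<bar>x\<bar>"
    using linbr_powr_le_exp by blast
  have "linbr x powr r * exp (- \<bar>x\<bar>) = linbr x powr (r + 2) * exp (- \<bar>x\<bar>) * linbr x powr (- 2)" for x
    using linbr_pos[of x] by (simp add: powr_add[symmetric] algebra_simps)
  also have "\<dots> x \<le> C * linbr x powr (- 2)" for x
    using mult_right_mono[OF C[of x], of "exp (- \<bar>x\<bar>) * linbr x powr (- 2)"]
    by (simp add: exp_minus field_simps)
  finally have "0 \<le> linbr x powr r * exp (- \<bar>x\<bar>) \<and> linbr x powr r * exp (- \<bar>x\<bar>) \<le> C * linbr x powr (- 2)"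
    for x by simp
  from integrable_le_scaled[OF _ integrable_linbr_powr this] show ?thesis
    by simp
qed

lemma integrable_weighted_exp_decay:
  fixes f :: "real \<Rightarrow> real"
  assumes [measurable]: "f \<in> borel_measurable borel"
    and decay: "\<And>x. \<bar>f x\<bar> \<le> c * exp (- \<bar>x\<bar>)" and p: "p \<ge> 1"
  shows "integrable lborel (\<lambda>x. \<bar>f x\<bar> powr p * jbr x powr r)"
proof -
  have "c \<ge> 0"
    using decay[of 0] by simp
  have "0 \<le> \<bar>f x\<bar> powr p * jbr x powr r \<and>
      \<bar>f x\<bar> powr p * jbr x powr r \<le> c powr p * 2 powr \<bar>r\<bar> * (linbr x powr r * exp (- \<bar>x\<bar>))" for x
  proof -
    have "\<bar>f x\<bar> powr p \<le> (c * exp (- \<bar>x\<bar>)) powr p"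
      using decay[of x] p by (intro powr_mono2) auto
    also have "\<dots> = c powr p * exp (- \<bar>x\<bar>) powr p"
      using \<open>c \<ge> 0\<close> by (simp add: powr_mult)
    also have "exp (- \<bar>x\<bar>) powr p \<le> exp (- \<bar>x\<bar>)"
      using p by (simp add: exp_powr_real mult_le_cancel_left1)
    finally have fp: "\<bar>f x\<bar> powr p \<le> c powr p * exp (- \<bar>x\<bar>)"
      by (simp add: mult_left_mono)
    show ?thesis
      using mult_mono[OF fp powr_jbr_le_linbr[of x r]] by (simp add: algebra_simps)
  qed
  from integrable_le_scaled[OF _ integrable_linbr_powr_exp this] show ?thesis
    by simp
qed

lemma integrable_exp_decay:
  fixes f :: "real \<Rightarrow> real"
  assumes [measurable]: "f \<in> borel_measurable borel" and "\<And>x. \<bar>f x\<bar> \<le> c * exp (- \<bar>x\<bar>)"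
  shows "integrable lborel f"
  using integrable_weighted_exp_decay[OF assms order_refl, of 0] jbr_pos
  by (simp add: integrable_abs_iff less_imp_neq[symmetric])

lemma lborel_integral_FTC_limits:
  fixes f F :: "real \<Rightarrow> real"
  assumes "\<And>x. (F has_real_derivative f x) (at x)" and "continuous_on UNIV f"
    and "integrable lborel f" and "(F \<longlongrightarrow> B) at_top" and "(F \<longlongrightarrow> A) at_bot"
  shows "(\<integral>x. f x \<partial>lborel) = B - A"
proof -
  have "(LBINT x=-\<infinity>..\<infinity>. f x) = B - A"
    using assms
    by (intro interval_integral_FTC_integrable)
       (auto simp: has_real_derivative_iff_has_vector_derivative continuous_on_eq_continuous_at
         set_integrable_def ereal_tendsto_simps1)
  then show ?thesis
    by (simp add: interval_lebesgue_integral_def set_lebesgue_integral_def)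
qed

definition sech2 :: "real \<Rightarrow> real" where
  "sech2 x = 1 - tanh x ^ 2"

definition tanh_dd :: "real \<Rightarrow> real" where
  "tanh_dd x = - 2 * tanh x * sech2 x"

definition xtanh_dd :: "real \<Rightarrow> real" where
  "xtanh_dd x = 2 * sech2 x - 2 * x * tanh x * sech2 x"

lemma has_real_derivative_tanh: "(tanh has_real_derivative sech2 x) (at x)"
  unfolding sech2_def using cosh_real_pos[of x] by (auto intro!: derivative_eq_intros)

lemma has_real_derivative_sech2: "(sech2 has_real_derivative tanh_dd x) (at x)"
proof -
  have "((\<lambda>x. 1 - tanh x ^ 2) has_real_derivative - (of_nat 2 * tanh x ^ (2 - 1) * (1 - tanh x ^ 2))) (at x)"
    using cosh_real_pos[of x] by (auto intro!: derivative_eq_intros)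
  then show ?thesis
    unfolding sech2_def[abs_def] tanh_dd_def by (simp add: algebra_simps)
qed

lemma has_real_derivative_xtanh: "((\<lambda>x. x * tanh x) has_real_derivative tanh x + x * sech2 x) (at x)"
  using DERIV_mult[OF DERIV_ident has_real_derivative_tanh] by (simp add: mult.commute)

lemma has_real_derivative_tanh_plus_x_sech2:
  "((\<lambda>x. tanh x + x * sech2 x) has_real_derivative xtanh_dd x) (at x)"
  using DERIV_add[OF has_real_derivative_tanh DERIV_mult[OF DERIV_ident has_real_derivative_sech2]]
  by (simp add: xtanh_dd_def tanh_dd_def algebra_simps)

lemma deriv_deriv_tanh: "deriv (deriv tanh) x = tanh_dd x"
proof -
  have "deriv tanh = sech2"
    using has_real_derivative_tanh by (intro ext DERIV_imp_deriv)
  then show ?thesis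
    using has_real_derivative_sech2 by (simp add: DERIV_imp_deriv)
qed

lemma deriv_deriv_xtanh: "deriv (deriv (\<lambda>y. y * tanh y)) x = xtanh_dd x"
proof -
  have "deriv (\<lambda>y. y * tanh y) = (\<lambda>x. tanh x + x * sech2 x)"
    using has_real_derivative_xtanh by (intro ext DERIV_imp_deriv)
  then show ?thesis
    using has_real_derivative_tanh_plus_x_sech2 by (simp add: DERIV_imp_deriv)
qed

lemma opA_altdef: "opA u a b x = u x + a * tanh_dd x + b * xtanh_dd x"
  by (simp add: opA_def deriv_deriv_tanh deriv_deriv_xtanh)

lemma continuous_on_tanh_real [continuous_intros]: "continuous_on A (tanh :: real \<Rightarrow> real)"
  using continuous_on_tanh[of A "\<lambda>x. x"] cosh_real_pos by (auto intro: continuous_on_id)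

lemma continuous_on_tanh_dd [continuous_intros]: "continuous_on A tanh_dd"
  and continuous_on_xtanh_dd [continuous_intros]: "continuous_on A xtanh_dd"
  unfolding tanh_dd_def[abs_def] xtanh_dd_def[abs_def] sech2_def[abs_def]
  by (intro continuous_intros)+

lemma borel_measurable_tanh_dd [measurable]: "tanh_dd \<in> borel_measurable borel"
  and borel_measurable_xtanh_dd [measurable]: "xtanh_dd \<in> borel_measurable borel"
  by (auto intro: borel_measurable_continuous_onI continuous_intros)

lemma sech2_le_exp: "0 \<le> sech2 x \<and> sech2 x \<le> 4 * exp (- 2 * \<bar>x\<bar>)"
proof -
  define u where "u = exp (- 2 * \<bar>x\<bar>)"
  have "u > 0"
    by (simp add: u_def)
  have "sech2 x = sech2 \<bar>x\<bar>"
    by (simp add: sech2_def abs_if)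
  also have "\<dots> = 1 - ((1 - u) / (1 + u)) ^ 2"
    by (simp add: sech2_def tanh_real_altdef u_def)
  also have "\<dots> = ((1 + u) ^ 2 - (1 - u) ^ 2) / (1 + u) ^ 2"
    using \<open>u > 0\<close> by (simp only: power_divide) (simp add: diff_divide_distrib)
  also have "(1 + u) ^ 2 - (1 - u) ^ 2 = 4 * u"
    by (simp add: power2_eq_square algebra_simps)
  finally have "sech2 x = 4 * u / (1 + u) ^ 2" .
  moreover have "1 \<le> (1 + u) ^ 2"
    using \<open>u > 0\<close> by (intro one_le_power) simp
  ultimately show ?thesis
    using \<open>u > 0\<close> by (simp add: divide_le_eq mult_le_cancel_left1 u_def)
qed

lemma sech2_linbr_le_exp: "sech2 x * linbr x ^ 2 \<le> 8 * exp (- \<bar>x\<bar>)"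
proof -
  have "linbr x ^ 2 \<le> 2 * exp \<bar>x\<bar>"
    using exp_lower_Taylor_quadratic[of "\<bar>x\<bar>"] by (simp add: linbr_def power2_eq_square algebra_simps)
  then have "sech2 x * linbr x ^ 2 \<le> 4 * exp (- 2 * \<bar>x\<bar>) * (2 * exp \<bar>x\<bar>)"
    using sech2_le_exp[of x] by (intro mult_mono) auto
  also have "\<dots> = 8 * exp (- \<bar>x\<bar>)"
    by (simp add: exp_add[symmetric])
  finally show ?thesis .
qed

lemma tanh_dd_exp_decay:
  shows "\<bar>tanh_dd x\<bar> \<le> 16 * exp (- \<bar>x\<bar>)" "\<bar>x * tanh_dd x\<bar> \<le> 16 * exp (- \<bar>x\<bar>)"
    and "\<bar>xtanh_dd x\<bar> \<le> 16 * exp (- \<bar>x\<bar>)" "\<bar>x * xtanh_dd x\<bar> \<le> 16 * exp (- \<bar>x\<bar>)"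
proof -
  have s: "0 \<le> sech2 x" and t: "\<bar>tanh x\<bar> \<le> 1"
    using sech2_le_exp[of x] tanh_real_bounds[of x] by auto
  have l: "1 \<le> linbr x ^ 2" "\<bar>x\<bar> \<le> linbr x ^ 2" "1 + \<bar>x\<bar> \<le> linbr x ^ 2" "\<bar>x\<bar> * (1 + \<bar>x\<bar>) \<le> linbr x ^ 2"
    by (auto simp: linbr_def power2_eq_square algebra_simps)
  have "\<bar>1 - x * tanh x\<bar> \<le> 1 + \<bar>x\<bar>"
    using t mult_left_le[OF t, of "\<bar>x\<bar>"] by (auto simp: abs_mult intro!: order_trans[OF abs_triangle_ineq4])
  moreover have "tanh_dd x = - 2 * sech2 x * tanh x" "xtanh_dd x = 2 * sech2 x * (1 - x * tanh x)"
    by (simp_all add: tanh_dd_def xtanh_dd_def algebra_simps)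
  ultimately have bounds: "\<bar>tanh_dd x\<bar> \<le> 2 * (sech2 x * 1)" "\<bar>x * tanh_dd x\<bar> \<le> 2 * (sech2 x * \<bar>x\<bar>)"
      "\<bar>xtanh_dd x\<bar> \<le> 2 * (sech2 x * (1 + \<bar>x\<bar>))" "\<bar>x * xtanh_dd x\<bar> \<le> 2 * (sech2 x * (\<bar>x\<bar> * (1 + \<bar>x\<bar>)))"
    using s t mult_left_le[OF t, of "\<bar>x\<bar>"] mult_left_le[OF t s]
    by (auto simp: abs_mult mult_ac intro!: mult_left_mono)
  have "2 * (sech2 x * y) \<le> 16 * exp (- \<bar>x\<bar>)" if "y \<le> linbr x ^ 2" for y
    using mult_left_mono[OF that s] sech2_linbr_le_exp[of x] by linarith
  then show "\<bar>tanh_dd x\<bar> \<le> 16 * exp (- \<bar>x\<bar>)" "\<bar>x * tanh_dd x\<bar> \<le> 16 * exp (- \<bar>x\<bar>)"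
    "\<bar>xtanh_dd x\<bar> \<le> 16 * exp (- \<bar>x\<bar>)" "\<bar>x * xtanh_dd x\<bar> \<le> 16 * exp (- \<bar>x\<bar>)"
    using bounds l by (meson order_trans)+
qed

lemma integrable_tanh_dd:
  shows "integrable lborel tanh_dd" "integrable lborel (\<lambda>x. x * tanh_dd x)"
    and "integrable lborel xtanh_dd" "integrable lborel (\<lambda>x. x * xtanh_dd x)"
  by (rule integrable_exp_decay[OF _ tanh_dd_exp_decay(1)] integrable_exp_decay[OF _ tanh_dd_exp_decay(2)]
      integrable_exp_decay[OF _ tanh_dd_exp_decay(3)] integrable_exp_decay[OF _ tanh_dd_exp_decay(4)];
      measurable)+

lemma wLp_tanh_dd:
  assumes "p \<ge> 1"
  shows "wLp p r tanh_dd" "wLp p r xtanh_dd"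
  using integrable_weighted_exp_decay[OF _ tanh_dd_exp_decay(1) assms, of "r * p"]
    integrable_weighted_exp_decay[OF _ tanh_dd_exp_decay(3) assms, of "r * p"]
  by (simp_all add: wLp_def abs_mult_jbr_powr)

lemma integral_tanh_dd: "(\<integral>x. tanh_dd x \<partial>lborel) = 0"
  using lborel_integral_FTC_limits[OF has_real_derivative_sech2 continuous_on_tanh_dd integrable_tanh_dd(1),
      of 0 0]
  unfolding sech2_def by (force intro: tendsto_eq_intros tanh_real_at_top tanh_real_at_bot)

lemma integral_x_tanh_dd: "(\<integral>x. x * tanh_dd x \<partial>lborel) = - 2"
proof -
  have "((\<lambda>x. x * sech2 x - tanh x) has_real_derivative x * tanh_dd x) (at x)" for x
    using DERIV_diff[OF DERIV_mult[OF DERIV_ident has_real_derivative_sech2] has_real_derivative_tanh]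
    by (simp add: mult.commute)
  moreover have "((\<lambda>x. x * sech2 x - tanh x) \<longlongrightarrow> -1) at_top" "((\<lambda>x. x * sech2 x - tanh x) \<longlongrightarrow> 1) at_bot"
    unfolding sech2_def by real_asymp+
  ultimately show ?thesis
    using lborel_integral_FTC_limits[OF _ _ integrable_tanh_dd(2)] by (force intro: continuous_intros)
qed

lemma integral_xtanh_dd: "(\<integral>x. xtanh_dd x \<partial>lborel) = 2"
proof -
  have "((\<lambda>x. tanh x + x * sech2 x) \<longlongrightarrow> 1) at_top" "((\<lambda>x. tanh x + x * sech2 x) \<longlongrightarrow> -1) at_bot"
    unfolding sech2_def by real_asymp+
  then show ?thesis
    using lborel_integral_FTC_limits[OF has_real_derivative_tanh_plus_x_sech2 continuous_on_xtanh_dd integrable_tanh_dd(3)]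
    by force
qed

lemma integral_x_xtanh_dd: "(\<integral>x. x * xtanh_dd x \<partial>lborel) = 0"
proof -
  have "((\<lambda>x. x * (x * sech2 x)) has_real_derivative x * xtanh_dd x) (at x)" for x
    using DERIV_mult[OF DERIV_ident DERIV_mult[OF DERIV_ident has_real_derivative_sech2]]
    by (simp add: xtanh_dd_def tanh_dd_def algebra_simps)
  moreover have "((\<lambda>x. x * (x * sech2 x)) \<longlongrightarrow> 0) at_top" "((\<lambda>x. x * (x * sech2 x)) \<longlongrightarrow> 0) at_bot"
    unfolding sech2_def by real_asymp+
  ultimately show ?thesis
    using lborel_integral_FTC_limits[OF _ _ integrable_tanh_dd(4)] by (force intro: continuous_intros)
qed

section \<open>Weak second derivatives and boundedness of A\<close>

definition weak_second_derivative ::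
    "(real \<Rightarrow> real) \<Rightarrow> (real \<Rightarrow> real) \<Rightarrow> (real \<Rightarrow> real) \<Rightarrow> bool" where
  "weak_second_derivative u u1 u2 \<longleftrightarrow>
     (\<forall>x. (u has_real_derivative u1 x) (at x)) \<and>
     (\<forall>x y. interval_lebesgue_integrable lborel (ereal x) (ereal y) u2 \<and>
            u1 y - u1 x = (LBINT t=ereal x..ereal y. u2 t))"

lemma kond2_iff:
  "kond2 p g phi phi1 phi2 \<longleftrightarrow> weak_second_derivative phi phi1 phi2 \<and>
     wLp p g phi \<and> wLp p (g + 1) phi1 \<and> wLp p (g + 2) phi2"
  by (simp add: kond2_def weak_second_derivative_def)

lemma weak_second_derivative_add:
  assumes "weak_second_derivative u u1 u2" "weak_second_derivative v v1 v2"
  shows "weak_second_derivative (\<lambda>x. u x + v x) (\<lambda>x. u1 x + v1 x) (\<lambda>x. u2 x + v2 x)"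
proof -
  have "interval_lebesgue_integrable lborel (ereal x) (ereal y) (\<lambda>t. u2 t + v2 t) \<and>
      u1 y + v1 y - (u1 x + v1 x) = (LBINT t=ereal x..ereal y. u2 t + v2 t)" for x y
  proof -
    have "u1 y - u1 x = (LBINT t=ereal x..ereal y. u2 t)" "v1 y - v1 x = (LBINT t=ereal x..ereal y. v2 t)"
      and "interval_lebesgue_integrable lborel (ereal x) (ereal y) u2"
        "interval_lebesgue_integrable lborel (ereal x) (ereal y) v2"
      using assms by (auto simp: weak_second_derivative_def)
    then show ?thesis
      by simp
  qed
  then show ?thesis
    using assms by (auto simp: weak_second_derivative_def intro!: DERIV_add)
qed

lemma weak_second_derivative_cmult:
  assumes "weak_second_derivative u u1 u2"
  shows "weak_second_derivative (\<lambda>x. c * u x) (\<lambda>x. c * u1 x) (\<lambda>x. c * u2 x)"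
  using assms
  by (auto simp: weak_second_derivative_def interval_lebesgue_integral_mult_right right_diff_distrib[symmetric]
      intro!: DERIV_cmult)

lemma weak_second_derivative_diff:
  assumes "weak_second_derivative u u1 u2" "weak_second_derivative v v1 v2"
  shows "weak_second_derivative (\<lambda>x. u x - v x) (\<lambda>x. u1 x - v1 x) (\<lambda>x. u2 x - v2 x)"
  using weak_second_derivative_add[OF assms(1) weak_second_derivative_cmult[OF assms(2), of "-1"]]
  by simp

lemma weak_second_derivative_C2:
  assumes "\<And>x. (u has_real_derivative u1 x) (at x)" "\<And>x. (u1 has_real_derivative u2 x) (at x)"
    and "continuous_on UNIV u2"
  shows "weak_second_derivative u u1 u2"
  unfolding weak_second_derivative_def
proof (intro conjI allI)
  fix x y :: real
  show "interval_lebesgue_integrable lborel (ereal x) (ereal y) u2"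
    using assms(3) by (intro interval_integrable_isCont) (simp add: continuous_on_eq_continuous_at)
  show "u1 y - u1 x = (LBINT t=ereal x..ereal y. u2 t)"
    by (rule interval_integral_FTC_finite[symmetric])
       (use assms in \<open>auto simp: has_real_derivative_iff_has_vector_derivative
          intro: has_vector_derivative_at_within continuous_on_subset\<close>)
qed (use assms(1) in simp)

lemma weak_second_derivative_tanh: "weak_second_derivative tanh sech2 tanh_dd"
  and weak_second_derivative_xtanh:
    "weak_second_derivative (\<lambda>x. x * tanh x) (\<lambda>x. tanh x + x * sech2 x) xtanh_dd"
  by (intro weak_second_derivative_C2 has_real_derivative_tanh has_real_derivative_sech2
      has_real_derivative_xtanh has_real_derivative_tanh_plus_x_sech2 continuous_on_tanh_dd continuous_on_xtanh_dd)+

lemma weak_second_derivative_primitive: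
  fixes g :: "real \<Rightarrow> real"
  assumes g: "integrable lborel g" and "integrable lborel (primitive g)"
  shows "weak_second_derivative (primitive (primitive g)) (primitive g) g"
  unfolding weak_second_derivative_def
  using has_real_derivative_primitive[OF assms(2) continuous_on_primitive[OF g]] primitive_diff[OF g] g
  by (auto simp: interval_lebesgue_integrable_def set_integrable_def integrable_indicator_mult)

lemma weak_second_derivative_ae_zero_imp_affine:
  assumes u: "weak_second_derivative u u1 u2" and [measurable]: "u2 \<in> borel_measurable borel"
    and zero: "AE x in lborel. u2 x = 0"
  shows "\<exists>k m. \<forall>x. u x = k * x + m"
proof -
  have "u1 y - u1 0 = 0" for y
  proof -
    have "u1 y - u1 0 = (LBINT t=ereal 0..ereal y. u2 t)"
      using u by (simp add: weak_second_derivative_def)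
    also have "\<dots> = (LBINT t=ereal 0..ereal y. 0)"
      using zero by (intro interval_integral_cong_AE) (auto elim: eventually_mono)
    finally show ?thesis
      by simp
  qed
  then have "(u has_real_derivative u1 0) (at x)" for x
    using u by (metis eq_iff_diff_eq_0 weak_second_derivative_def)
  then have "((\<lambda>x. u x - u1 0 * x) has_real_derivative u1 0 - u1 0 * 1) (at x)" for x
    by (intro DERIV_diff DERIV_cmult DERIV_ident)
  then have "((\<lambda>x. u x - u1 0 * x) has_real_derivative 0) (at x)" for x
    by simp
  then have "u x - u1 0 * x = u 0 - u1 0 * 0" for x
    by (intro DERIV_isconst_all allI)
  then show ?thesis
    by (metis add.commute diff_eq_eq mult_zero_right diff_zero)
qed

lemma wLp_norm_le_kond2_norm:
  assumes "p > 0"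
  shows "wLp_norm p (g + 2) phi2 \<le> kond2_norm p g phi phi1 phi2"
proof -
  have "wLp_norm p (g + 2) phi2 = (wLp_norm p (g + 2) phi2 powr p) powr (1/p)"
    using assms by (simp add: powr_powr wLp_norm_nonneg)
  also have "\<dots> \<le> kond2_norm p g phi phi1 phi2"
    unfolding kond2_norm_def using assms by (intro powr_mono2) auto
  finally show ?thesis .
qed

lemma kond2_norm_le_sum:
  assumes "p \<ge> 1"
  shows "kond2_norm p g phi phi1 phi2
           \<le> 3 * (wLp_norm p g phi + wLp_norm p (g + 1) phi1 + wLp_norm p (g + 2) phi2)"
proof -
  have "kond2_norm p g phi phi1 phi2
      \<le> 3 powr (1/p) * (wLp_norm p g phi + wLp_norm p (g + 1) phi1 + wLp_norm p (g + 2) phi2)"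
    unfolding kond2_norm_def using powr_add3_le[of "wLp_norm p g phi powr p" "wLp_norm p (g + 1) phi1 powr p"
        "wLp_norm p (g + 2) phi2 powr p" "1/p"] assms
    by (simp add: powr_powr wLp_norm_nonneg)
  also have "\<dots> \<le> 3 powr 1 * (wLp_norm p g phi + wLp_norm p (g + 1) phi1 + wLp_norm p (g + 2) phi2)"
    using assms by (intro mult_right_mono powr_mono) (auto simp: wLp_norm_nonneg)
  finally show ?thesis
    by simp
qed

lemma opA_bounded:
  assumes p: "p \<ge> 1"
  shows "\<exists>C\<ge>0. \<forall>u a b. wLp p \<gamma> u \<longrightarrow>
           wLp p \<gamma> (opA u a b) \<and> wLp_norm p \<gamma> (opA u a b) \<le> C * (wLp_norm p \<gamma> u + \<bar>a\<bar> + \<bar>b\<bar>)"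
proof -
  define M where "M = max 1 (max (wLp_norm p \<gamma> tanh_dd) (wLp_norm p \<gamma> xtanh_dd))"
  show ?thesis
  proof (intro exI[of _ "16 * M"] conjI allI impI)
    show "16 * M \<ge> 0"
      by (simp add: M_def)
    fix u :: "real \<Rightarrow> real" and a b :: real
    assume u: "wLp p \<gamma> u"
    have "wLp p \<gamma> (\<lambda>x. a * tanh_dd x) \<and> wLp_norm p \<gamma> (\<lambda>x. a * tanh_dd x) = \<bar>a\<bar> * wLp_norm p \<gamma> tanh_dd"
         "wLp p \<gamma> (\<lambda>x. b * xtanh_dd x) \<and> wLp_norm p \<gamma> (\<lambda>x. b * xtanh_dd x) = \<bar>b\<bar> * wLp_norm p \<gamma> xtanh_dd"
      using p by (intro wLp_cmult wLp_tanh_dd; simp)+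
    moreover have "\<bar>a\<bar> * wLp_norm p \<gamma> tanh_dd \<le> \<bar>a\<bar> * M" "\<bar>b\<bar> * wLp_norm p \<gamma> xtanh_dd \<le> \<bar>b\<bar> * M"
      by (intro mult_left_mono; simp add: M_def)+
    ultimately have w: "wLp p \<gamma> (\<lambda>x. a * tanh_dd x + b * xtanh_dd x)"
      "wLp_norm p \<gamma> (\<lambda>x. a * tanh_dd x + b * xtanh_dd x) \<le> 4 * (\<bar>a\<bar> * M + \<bar>b\<bar> * M)"
      using wLp_add[OF p, of \<gamma> "\<lambda>x. a * tanh_dd x" "\<lambda>x. b * xtanh_dd x"] by auto
    have "opA u a b = (\<lambda>x. u x + (a * tanh_dd x + b * xtanh_dd x))"
      by (simp add: fun_eq_iff opA_altdef)
    moreover have "4 * (wLp_norm p \<gamma> u + 4 * (\<bar>a\<bar> * M + \<bar>b\<bar> * M))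
        \<le> 16 * M * (wLp_norm p \<gamma> u + \<bar>a\<bar> + \<bar>b\<bar>)"
    proof -
      have "M \<ge> 1"
        by (simp add: M_def)
      have "wLp_norm p \<gamma> u \<le> M * wLp_norm p \<gamma> u"
        using mult_right_mono[OF \<open>M \<ge> 1\<close> wLp_norm_nonneg[of p \<gamma> u]] by simp
      then have "4 * wLp_norm p \<gamma> u \<le> 16 * (M * wLp_norm p \<gamma> u)"
        using wLp_norm_nonneg[of p \<gamma> u] by linarith
      then show ?thesis
        by (simp add: algebra_simps)
    qed
    ultimately show "wLp p \<gamma> (opA u a b)" "wLp_norm p \<gamma> (opA u a b) \<le> 16 * M * (wLp_norm p \<gamma> u + \<bar>a\<bar> + \<bar>b\<bar>)"
      using wLp_add[OF p u w(1)] w(2) by auto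
  qed
qed

lemma opA_bounded_kond2:
  assumes p: "p > 1"
  shows "\<exists>C. \<forall>phi phi1 phi2 a b. kond2 p g phi phi1 phi2 \<longrightarrow>
           wLp p (g + 2) (opA phi2 a b) \<and>
           wLp_norm p (g + 2) (opA phi2 a b) \<le> C * (kond2_norm p g phi phi1 phi2 + \<bar>a\<bar> + \<bar>b\<bar>)"
proof -
  obtain C where "C \<ge> 0" and bounded: "\<And>u a b. wLp p (g + 2) u \<Longrightarrow> wLp p (g + 2) (opA u a b) \<and>
      wLp_norm p (g + 2) (opA u a b) \<le> C * (wLp_norm p (g + 2) u + \<bar>a\<bar> + \<bar>b\<bar>)"
    using opA_bounded[of p "g + 2"] p by auto
  show ?thesis
  proof (intro exI[of _ C] allI impI)
    fix phi phi1 phi2 a b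
    assume "kond2 p g phi phi1 phi2"
    then have "wLp p (g + 2) phi2"
      by (simp add: kond2_def)
    moreover have "C * (wLp_norm p (g + 2) phi2 + \<bar>a\<bar> + \<bar>b\<bar>) \<le> C * (kond2_norm p g phi phi1 phi2 + \<bar>a\<bar> + \<bar>b\<bar>)"
      using wLp_norm_le_kond2_norm[of p g phi2 phi phi1] p \<open>C \<ge> 0\<close> by (intro mult_left_mono) auto
    ultimately show "wLp p (g + 2) (opA phi2 a b) \<and>
        wLp_norm p (g + 2) (opA phi2 a b) \<le> C * (kond2_norm p g phi phi1 phi2 + \<bar>a\<bar> + \<bar>b\<bar>)"
      using bounded[of phi2 a b] by auto
  qed
qed

section \<open>Injectivity of A\<close>

lemma not_integrable_if_eventually_ge:
  fixes E :: "real \<Rightarrow> real"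
  assumes p: "p > 0" and rp: "r * p > -1" and \<epsilon>: "\<epsilon> > 0"
    and ev: "eventually (\<lambda>x. \<epsilon> \<le> \<bar>E x\<bar>) at_top"
  shows "\<not> integrable lborel (\<lambda>x. \<bar>E x * jbr x powr r\<bar> powr p)"
proof
  define f where "f x = \<bar>E x * jbr x powr r\<bar> powr p" for x
  \<comment> \<open>On [X, \<infinity>) the integrand dominates a multiple of the non-integrable (1 + x) powr s.\<close>
  define s where "s = min (r * p) 0"
  assume "integrable lborel (\<lambda>x. \<bar>E x * jbr x powr r\<bar> powr p)"
  then have f: "integrable lborel f"
    by (simp add: f_def[abs_def])
  obtain N where N: "\<And>x. x \<ge> N \<Longrightarrow> \<epsilon> \<le> \<bar>E x\<bar>"
    using ev by (auto simp: eventually_at_top_linorder)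
  define X where "X = max N 0"
  have s: "s > -1" "s \<le> 0" "s \<le> r * p"
    using rp by (auto simp: s_def)
  have lower: "\<epsilon> powr p * (1 + x) powr s \<le> f x" if "x \<ge> X" for x
  proof -
    have "jbr x \<le> 1 + x"
      using jbr_le_linbr[of x] that by (simp add: X_def linbr_def)
    then have "(1 + x) powr s \<le> jbr x powr s"
      using s jbr_pos[of x] by (intro powr_mono2') auto
    also have "\<dots> \<le> jbr x powr (r * p)"
      using s jbr_ge_1[of x] by (intro powr_mono) auto
    finally have "\<epsilon> powr p * (1 + x) powr s \<le> \<bar>E x\<bar> powr p * jbr x powr (r * p)"
      using N[of x] that \<epsilon> p by (intro mult_mono powr_mono2) (auto simp: X_def)
    then show ?thesis
      by (simp add: f_def abs_mult_jbr_powr)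
  qed
  define F where "F T = \<epsilon> powr p * (((1 + T) powr (s + 1) - (1 + X) powr (s + 1)) / (s + 1))" for T
  have below: "F T \<le> integral\<^sup>L lborel f" if "T \<ge> X" for T
  proof -
    note I = has_bochner_integral_powr_Icc[OF s(1) _ that, unfolded has_bochner_integral_iff]
    have "F T = (\<integral>x. \<epsilon> powr p * (indicator {X..T} x * (1 + x) powr s) \<partial>lborel)"
      using I by (simp add: X_def F_def)
    also have "\<dots> \<le> integral\<^sup>L lborel f"
      using I lower f by (intro integral_mono) (auto simp: X_def f_def split: split_indicator)
    finally show ?thesis .
  qed
  have "filterlim F at_top at_top"
    unfolding F_def using s \<epsilon> by real_asymp
  then have "eventually (\<lambda>T. X \<le> T \<and> integral\<^sup>L lborel f + 1 \<le> F T) at_top"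
    by (intro eventually_conj eventually_ge_at_top) (simp add: filterlim_at_top)
  then obtain T where "X \<le> T" "integral\<^sup>L lborel f + 1 \<le> F T"
    unfolding eventually_at_top_linorder by blast
  with below[of T] show False
    by linarith
qed

lemma asymptotically_affine_wLp_imp_zero:
  fixes E :: "real \<Rightarrow> real"
  assumes p: "p > 0" and rp: "r * p > -1"
    and lim: "((\<lambda>x. E x - (A * x + B)) \<longlongrightarrow> 0) at_top"
    and int: "integrable lborel (\<lambda>x. \<bar>E x * jbr x powr r\<bar> powr p)"
  shows "A = 0 \<and> B = 0"
proof (rule ccontr)
  have small: "eventually (\<lambda>x. \<bar>E x - (A * x + B)\<bar> < \<delta>) at_top" if "\<delta> > 0" for \<delta>
    using tendstoD[OF lim that] by (simp add: dist_real_def)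
  assume "\<not> (A = 0 \<and> B = 0)"
  then obtain \<epsilon> :: real where "\<epsilon> > 0" "eventually (\<lambda>x. \<epsilon> \<le> \<bar>E x\<bar>) at_top"
  proof (cases "A = 0")
    case True
    with \<open>\<not> (A = 0 \<and> B = 0)\<close> have "\<bar>B\<bar> / 2 > 0"
      by simp
    from small[OF this] have "eventually (\<lambda>x. \<bar>B\<bar> / 2 \<le> \<bar>E x\<bar>) at_top"
    proof eventually_elim
      case (elim x)
      then show ?case
        using abs_triangle_ineq2[of B "E x"] True by (simp add: abs_minus_commute)
    qed
    then show ?thesis
      by (rule that[rotated]) fact
  next
    case False
    have "eventually (\<lambda>x. 2 + \<bar>B\<bar> \<le> \<bar>A * x\<bar>) at_top"
      using eventually_ge_at_top[of "(2 + \<bar>B\<bar>) / \<bar>A\<bar>"] eventually_ge_at_top[of 0]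
    proof eventually_elim
      case (elim x)
      then show ?case
        using False by (simp add: abs_mult pos_divide_le_eq mult.commute)
    qed
    with small[OF zero_less_one] have "eventually (\<lambda>x. 1 \<le> \<bar>E x\<bar>) at_top"
    proof eventually_elim
      case (elim x)
      then show ?case
        using abs_triangle_ineq4[of "A * x + B" B] abs_triangle_ineq4[of "E x" "E x - (A * x + B)"] by simp
    qed
    then show ?thesis
      by (rule that[rotated]) simp
  qed
  from not_integrable_if_eventually_ge[OF p rp this] int show False
    by simp
qed

lemma tendsto_affine_mult_one_minus_tanh:
  fixes c d :: real
  shows "((\<lambda>x. (c * x + d) * (1 - tanh x)) \<longlongrightarrow> 0) at_top"
proof -
  have "((\<lambda>x::real. x * (1 - tanh x)) \<longlongrightarrow> 0) at_top"
    by real_asymp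
  moreover have "((\<lambda>x::real. 1 - tanh x) \<longlongrightarrow> 0) at_top"
    by real_asymp
  ultimately have "((\<lambda>x. c * (x * (1 - tanh x)) + d * (1 - tanh x)) \<longlongrightarrow> c * 0 + d * 0) at_top"
    by (intro tendsto_intros)
  then show ?thesis
    by (simp add: algebra_simps)
qed

(* phi - psi + \<alpha> tanh + \<beta> x tanh has vanishing weak second derivative, hence is affine;
   weighted integrability at +\<infinity> and at -\<infinity> then kills all four coefficients. *)
lemma opA_injective:
  fixes p \<gamma> a b c d :: real
  assumes p: "p > 1" and \<gamma>: "\<gamma> > 2 - 1/p"
    and phi: "kond2 p (\<gamma> - 2) phi phi1 phi2" and psi: "kond2 p (\<gamma> - 2) psi psi1 psi2"
    and ae: "AE x in lborel. opA phi2 a b x = opA psi2 c d x"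
  shows "phi = psi \<and> a = c \<and> b = d"
proof -
  define \<alpha> \<beta> where "\<alpha> = a - c" and "\<beta> = b - d"
  have [measurable]: "phi2 \<in> borel_measurable borel" "psi2 \<in> borel_measurable borel"
    using phi psi by (simp_all add: kond2_def wLp_def)
  have "weak_second_derivative (\<lambda>x. phi x - psi x + \<alpha> * tanh x + \<beta> * (x * tanh x))
      (\<lambda>x. phi1 x - psi1 x + \<alpha> * sech2 x + \<beta> * (tanh x + x * sech2 x))
      (\<lambda>x. phi2 x - psi2 x + \<alpha> * tanh_dd x + \<beta> * xtanh_dd x)"
    using phi psi unfolding kond2_iff
    by (intro weak_second_derivative_add weak_second_derivative_diff weak_second_derivative_cmult
        weak_second_derivative_tanh weak_second_derivative_xtanh) auto
  moreover have "(\<lambda>x. phi2 x - psi2 x + \<alpha> * tanh_dd x + \<beta> * xtanh_dd x) \<in> borel_measurable borel"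
    by measurable
  moreover have "AE x in lborel. phi2 x - psi2 x + \<alpha> * tanh_dd x + \<beta> * xtanh_dd x = 0"
    using ae by eventually_elim (simp add: opA_altdef \<alpha>_def \<beta>_def algebra_simps)
  ultimately obtain k m where km: "\<And>x. phi x - psi x + \<alpha> * tanh x + \<beta> * (x * tanh x) = k * x + m"
    using weak_second_derivative_ae_zero_imp_affine by blast
  define E where "E x = phi x - psi x" for x
  have "wLp p (\<gamma> - 2) (\<lambda>x. phi x + (-1) * psi x)"
    using phi psi p wLp_cmult[of p "\<gamma> - 2" psi "-1"] by (intro conjunct1[OF wLp_add]) (auto simp: kond2_def)
  then have int: "integrable lborel (\<lambda>x. \<bar>E x * jbr x powr (\<gamma> - 2)\<bar> powr p)"
    by (simp add: wLp_def E_def)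
  then have int_reflect: "integrable lborel (\<lambda>x. \<bar>E (- x) * jbr x powr (\<gamma> - 2)\<bar> powr p)"
    using lborel_integrable_reflect_iff[of "\<lambda>x. \<bar>E x * jbr x powr (\<gamma> - 2)\<bar> powr p"] by simp
  have rp: "(\<gamma> - 2) * p > -1"
    using \<gamma> p by (simp add: field_simps)
  have "E x - ((k - \<beta>) * x + (m - \<alpha>)) = (\<beta> * x + \<alpha>) * (1 - tanh x)"
    "E (- x) - ((- k - \<beta>) * x + (m + \<alpha>)) = (\<beta> * x - \<alpha>) * (1 - tanh x)" for x
    using km[of x] km[of "- x"] by (simp_all add: E_def algebra_simps)
  then have lim: "((\<lambda>x. E x - ((k - \<beta>) * x + (m - \<alpha>))) \<longlongrightarrow> 0) at_top"
    "((\<lambda>x. E (- x) - ((- k - \<beta>) * x + (m + \<alpha>))) \<longlongrightarrow> 0) at_top"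
    using tendsto_affine_mult_one_minus_tanh[of \<beta> \<alpha>] tendsto_affine_mult_one_minus_tanh[of \<beta> "- \<alpha>"]
    by simp_all
  have "k - \<beta> = 0 \<and> m - \<alpha> = 0" "- k - \<beta> = 0 \<and> m + \<alpha> = 0"
    using p by (intro asymptotically_affine_wLp_imp_zero[OF _ rp lim(1) int]
        asymptotically_affine_wLp_imp_zero[OF _ rp lim(2) int_reflect]; simp)+
  then have "\<alpha> = 0" "\<beta> = 0" "k = 0" "m = 0"
    by linarith+
  then show ?thesis
    using km by (auto simp: \<alpha>_def \<beta>_def fun_eq_iff)
qed

section \<open>Surjectivity of A\<close>

lemma wLp_mult_x:
  assumes p: "p > 0" and u: "wLp p (s + 1) u"
  shows "wLp p s (\<lambda>x. x * u x) \<and> wLp_norm p s (\<lambda>x. x * u x) \<le> wLp_norm p (s + 1) u"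
proof -
  have [measurable]: "u \<in> borel_measurable borel"
    and int: "integrable lborel (\<lambda>x. \<bar>u x * jbr x powr (s + 1)\<bar> powr p)"
    using u by (simp_all add: wLp_def)
  have "\<bar>x * u x * jbr x powr s\<bar> \<le> \<bar>u x * jbr x powr (s + 1)\<bar>" for x
    using mult_right_mono[OF abs_le_jbr[of x], of "\<bar>u x\<bar> * jbr x powr s"] jbr_pos[of x]
    by (simp add: abs_mult powr_add mult_ac)
  then have "0 \<le> \<bar>x * u x * jbr x powr s\<bar> powr p \<and>
      \<bar>x * u x * jbr x powr s\<bar> powr p \<le> 1 * \<bar>u x * jbr x powr (s + 1)\<bar> powr p" for x
    using p by (simp add: powr_mono2)
  from integrable_le_scaled[OF _ int this] p show ?thesis
    by (simp add: wLp_def wLp_norm_def powr_mono2 integral_nonneg_AE)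
qed

lemma wLp_moments:
  fixes p \<gamma> :: real
  assumes p: "p > 1" and \<gamma>: "\<gamma> > 2 - 1/p"
  shows "\<exists>K\<ge>0. \<forall>f. wLp p \<gamma> f \<longrightarrow> integrable lborel f \<and> integrable lborel (\<lambda>x. x * f x) \<and>
           \<bar>\<integral>x. f x \<partial>lborel\<bar> \<le> K * wLp_norm p \<gamma> f \<and> \<bar>\<integral>x. x * f x \<partial>lborel\<bar> \<le> K * wLp_norm p \<gamma> f"
proof -
  have "\<gamma> > 1 - 1/p" "\<gamma> - 1 > 1 - 1/p"
    using \<gamma> p by (simp_all add: field_simps)
  then obtain K0 K1 where K: "K0 \<ge> 0" "K1 \<ge> 0"
    and L1: "\<And>u. wLp p \<gamma> u \<Longrightarrow> integrable lborel u \<and> (\<integral>x. \<bar>u x\<bar> \<partial>lborel) \<le> K0 * wLp_norm p \<gamma> u"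
      "\<And>u. wLp p (\<gamma> - 1) u \<Longrightarrow> integrable lborel u \<and> (\<integral>x. \<bar>u x\<bar> \<partial>lborel) \<le> K1 * wLp_norm p (\<gamma> - 1) u"
    using wLp_imp_integrable[OF p] by meson
  show ?thesis
  proof (intro exI[of _ "K0 + K1"] conjI allI impI)
    fix f
    assume f: "wLp p \<gamma> f"
    then have xf: "wLp p (\<gamma> - 1) (\<lambda>x. x * f x)" "wLp_norm p (\<gamma> - 1) (\<lambda>x. x * f x) \<le> wLp_norm p \<gamma> f"
      using wLp_mult_x[of p "\<gamma> - 1" f] p by auto
    show "integrable lborel f" "integrable lborel (\<lambda>x. x * f x)"
      using L1(1)[OF f] L1(2)[OF xf(1)] by auto
    have "\<bar>\<integral>x. f x \<partial>lborel\<bar> \<le> K0 * wLp_norm p \<gamma> f"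
      using L1(1)[OF f] integral_abs_bound[of lborel f] by linarith
    then show "\<bar>\<integral>x. f x \<partial>lborel\<bar> \<le> (K0 + K1) * wLp_norm p \<gamma> f"
      using K wLp_norm_nonneg[of p \<gamma> f] by (simp add: distrib_right add_increasing2)
    have "\<bar>\<integral>x. x * f x \<partial>lborel\<bar> \<le> K1 * wLp_norm p \<gamma> f"
      using L1(2)[OF xf(1)] integral_abs_bound[of lborel "\<lambda>x. x * f x"] mult_left_mono[OF xf(2) K(2)]
      by linarith
    then show "\<bar>\<integral>x. x * f x \<partial>lborel\<bar> \<le> (K0 + K1) * wLp_norm p \<gamma> f"
      using K wLp_norm_nonneg[of p \<gamma> f] by (simp add: distrib_right add_increasing)
  qed (use K in simp)
qed

lemma double_primitive_kond2:
  fixes p \<beta> :: real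
  assumes p: "p > 1" and \<beta>: "\<beta> > -1/p"
  shows "\<exists>C\<ge>0. \<forall>g. wLp p (\<beta> + 2) g \<longrightarrow> (\<integral>x. g x \<partial>lborel) = 0 \<longrightarrow> (\<integral>x. x * g x \<partial>lborel) = 0 \<longrightarrow>
           kond2 p \<beta> (primitive (primitive g)) (primitive g) g \<and>
           kond2_norm p \<beta> (primitive (primitive g)) (primitive g) g \<le> C * wLp_norm p (\<beta> + 2) g"
proof -
  have "\<beta> + 1 > -1/p" "\<beta> + 2 > 2 - 1/p" "\<beta> + 1 > 1 - 1/p" "\<beta> + 1 + 1 = \<beta> + 2"
    using \<beta> p by simp_all
  obtain C1 C2 where "C1 \<ge> 0" "C2 \<ge> 0" and
    hardy1: "\<And>g. wLp p (\<beta> + 2) g \<Longrightarrow> (\<integral>x. g x \<partial>lborel) = 0 \<Longrightarrow>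
      wLp p (\<beta> + 1) (primitive g) \<and> wLp_norm p (\<beta> + 1) (primitive g) \<le> C1 * wLp_norm p (\<beta> + 2) g" and
    hardy2: "\<And>g. wLp p (\<beta> + 1) g \<Longrightarrow> (\<integral>x. g x \<partial>lborel) = 0 \<Longrightarrow>
      wLp p \<beta> (primitive g) \<and> wLp_norm p \<beta> (primitive g) \<le> C2 * wLp_norm p (\<beta> + 1) g"
    using Hardy_inequality_primitive_wLp[OF p \<open>\<beta> + 1 > -1/p\<close>, unfolded \<open>\<beta> + 1 + 1 = \<beta> + 2\<close>]
      Hardy_inequality_primitive_wLp[OF p \<beta>] by meson
  have moments: "\<And>f. wLp p (\<beta> + 2) f \<Longrightarrow> integrable lborel f \<and> integrable lborel (\<lambda>x. x * f x)"
    using wLp_moments[OF p \<open>\<beta> + 2 > 2 - 1/p\<close>] by blast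
  have L1: "\<And>u. wLp p (\<beta> + 1) u \<Longrightarrow> integrable lborel u"
    using wLp_imp_integrable[OF p \<open>\<beta> + 1 > 1 - 1/p\<close>] by blast
  show ?thesis
  proof (intro exI[of _ "3 * (C2 * C1 + C1 + 1)"] allI impI conjI)
    show "3 * (C2 * C1 + C1 + 1) \<ge> 0"
      using \<open>C1 \<ge> 0\<close> \<open>C2 \<ge> 0\<close> by simp
    fix g
    assume g: "wLp p (\<beta> + 2) g" and mean: "(\<integral>x. g x \<partial>lborel) = 0" and moment: "(\<integral>x. x * g x \<partial>lborel) = 0"
    have [measurable]: "g \<in> borel_measurable borel"
      using g by (simp add: wLp_def)
    note g1 = hardy1[OF g mean]
    have "(\<integral>x. primitive g x \<partial>lborel) = 0"
      using integral_primitive[of g] moments[OF g] mean moment by simp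
    note g0 = hardy2[OF conjunct1[OF g1] this]
    have "weak_second_derivative (primitive (primitive g)) (primitive g) g"
      using moments[OF g] L1[OF conjunct1[OF g1]] by (intro weak_second_derivative_primitive) auto
    then show "kond2 p \<beta> (primitive (primitive g)) (primitive g) g"
      using g g0 g1 by (simp add: kond2_iff)
    have "wLp_norm p \<beta> (primitive (primitive g)) \<le> C2 * (C1 * wLp_norm p (\<beta> + 2) g)"
      using g0 g1 \<open>C2 \<ge> 0\<close> by (auto intro: order_trans mult_left_mono)
    with g1 kond2_norm_le_sum[of p \<beta> "primitive (primitive g)" "primitive g" g] p
    show "kond2_norm p \<beta> (primitive (primitive g)) (primitive g) g
        \<le> 3 * (C2 * C1 + C1 + 1) * wLp_norm p (\<beta> + 2) g"
      by (simp add: algebra_simps)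
  qed
qed

lemma opA_moment_correction:
  fixes f :: "real \<Rightarrow> real"
  assumes "integrable lborel f" "integrable lborel (\<lambda>x. x * f x)"
  defines "a \<equiv> (\<integral>x. x * f x \<partial>lborel) / 2" and "b \<equiv> - (\<integral>x. f x \<partial>lborel) / 2"
  shows "(\<integral>x. opA f a b x \<partial>lborel) = 0" "(\<integral>x. x * opA f a b x \<partial>lborel) = 0"
proof -
  have "opA f a b x = f x + a * tanh_dd x + b * xtanh_dd x"
    "x * opA f a b x = x * f x + a * (x * tanh_dd x) + b * (x * xtanh_dd x)" for x
    by (simp_all add: opA_altdef algebra_simps)
  then show "(\<integral>x. opA f a b x \<partial>lborel) = 0" "(\<integral>x. x * opA f a b x \<partial>lborel) = 0"
    using assms(1,2) integrable_tanh_dd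
    by (simp_all add: integral_tanh_dd integral_xtanh_dd integral_x_tanh_dd integral_x_xtanh_dd a_def b_def)
qed

lemma opA_surjective:
  fixes p \<gamma> :: real
  assumes p: "p > 1" and \<gamma>: "\<gamma> > 2 - 1/p"
  shows "\<exists>C. \<forall>f. wLp p \<gamma> f \<longrightarrow>
           (\<exists>phi phi1 phi2 a b. kond2 p (\<gamma> - 2) phi phi1 phi2 \<and>
              (AE x in lborel. opA phi2 a b x = f x) \<and>
              kond2_norm p (\<gamma> - 2) phi phi1 phi2 + \<bar>a\<bar> + \<bar>b\<bar> \<le> C * wLp_norm p \<gamma> f)"
proof -
  obtain K where moments: "\<And>f. wLp p \<gamma> f \<Longrightarrow>
      integrable lborel f \<and> integrable lborel (\<lambda>x. x * f x) \<and>
      \<bar>\<integral>x. f x \<partial>lborel\<bar> \<le> K * wLp_norm p \<gamma> f \<and> \<bar>\<integral>x. x * f x \<partial>lborel\<bar> \<le> K * wLp_norm p \<gamma> f"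
    using wLp_moments[OF p \<gamma>] by blast
  obtain CA where "CA \<ge> 0" and bounded: "\<And>u a b. wLp p \<gamma> u \<Longrightarrow>
      wLp p \<gamma> (opA u a b) \<and> wLp_norm p \<gamma> (opA u a b) \<le> CA * (wLp_norm p \<gamma> u + \<bar>a\<bar> + \<bar>b\<bar>)"
    using opA_bounded[of p \<gamma>] p by auto
  have "\<gamma> - 2 > -1/p"
    using \<gamma> by simp
  from double_primitive_kond2[OF p this] obtain C where "C \<ge> 0" and kond2: "\<And>g. wLp p \<gamma> g \<Longrightarrow>
      (\<integral>x. g x \<partial>lborel) = 0 \<Longrightarrow> (\<integral>x. x * g x \<partial>lborel) = 0 \<Longrightarrow>
      kond2 p (\<gamma> - 2) (primitive (primitive g)) (primitive g) g \<and>
      kond2_norm p (\<gamma> - 2) (primitive (primitive g)) (primitive g) g \<le> C * wLp_norm p \<gamma> g"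
    by auto
  show ?thesis
  proof (intro exI[of _ "C * CA * (1 + K) + K"] allI impI)
    fix f
    assume f: "wLp p \<gamma> f"
    define N where "N = wLp_norm p \<gamma> f"
    \<comment> \<open>a and b remove the zeroth and first moments of f, so that the double primitive decays.\<close>
    define a where "a = - (\<integral>x. x * f x \<partial>lborel) / 2"
    define b where "b = (\<integral>x. f x \<partial>lborel) / 2"
    define g where "g = opA f (- a) (- b)"
    note f_moments = moments[OF f, folded N_def]
    have ab: "\<bar>a\<bar> + \<bar>b\<bar> \<le> K * N"
      using f_moments by (simp add: a_def b_def)
    have g: "wLp p \<gamma> g" "wLp_norm p \<gamma> g \<le> CA * (1 + K) * N"
      using bounded[OF f, of "- a" "- b"] mult_left_mono[OF ab \<open>CA \<ge> 0\<close>]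
      by (auto simp: g_def N_def algebra_simps)
    have "(\<integral>x. g x \<partial>lborel) = 0" "(\<integral>x. x * g x \<partial>lborel) = 0"
      using opA_moment_correction[of f] f_moments by (simp_all add: g_def a_def b_def)
    note g_kond2 = kond2[OF g(1) this]
    have "kond2_norm p (\<gamma> - 2) (primitive (primitive g)) (primitive g) g \<le> C * (CA * (1 + K) * N)"
      using g_kond2 mult_left_mono[OF g(2) \<open>C \<ge> 0\<close>] by linarith
    moreover have "AE x in lborel. opA g a b x = f x"
      by (simp add: opA_altdef g_def)
    ultimately show "\<exists>phi phi1 phi2 a b. kond2 p (\<gamma> - 2) phi phi1 phi2 \<and>
        (AE x in lborel. opA phi2 a b x = f x) \<and>
        kond2_norm p (\<gamma> - 2) phi phi1 phi2 + \<bar>a\<bar> + \<bar>b\<bar> \<le> (C * CA * (1 + K) + K) * wLp_norm p \<gamma> f"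
      using g_kond2 ab unfolding N_def by (intro exI[of _ "primitive (primitive g)"] exI) (auto simp: algebra_simps)
  qed
qed

theorem lemma3p3:
  fixes p \<gamma> :: real
  assumes "1 < p" and "\<gamma> > 2 - 1 / p"
  shows
    \<comment> \<open>A is a bounded operator M^{2,p}_{gamma-2} x R^2 -> L^p_gamma\<close>
    "(\<exists>C. \<forall>phi phi1 phi2 a b. kond2 p (\<gamma> - 2) phi phi1 phi2 \<longrightarrow>
        wLp p \<gamma> (opA phi2 a b) \<and>
        wLp_norm p \<gamma> (opA phi2 a b) \<le> C * (kond2_norm p (\<gamma> - 2) phi phi1 phi2 + \<bar>a\<bar> + \<bar>b\<bar>))
   \<and> \<comment> \<open>A is injective (equality in L^p_gamma is a.e. equality)\<close>
    (\<forall>phi phi1 phi2 a b psi psi1 psi2 c d.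
        kond2 p (\<gamma> - 2) phi phi1 phi2 \<longrightarrow> kond2 p (\<gamma> - 2) psi psi1 psi2 \<longrightarrow>
        (AE x in lborel. opA phi2 a b x = opA psi2 c d x) \<longrightarrow>
        phi = psi \<and> a = c \<and> b = d)
   \<and> \<comment> \<open>A is surjective with bounded inverse\<close>
    (\<exists>C. \<forall>f. wLp p \<gamma> f \<longrightarrow>
        (\<exists>phi phi1 phi2 a b. kond2 p (\<gamma> - 2) phi phi1 phi2 \<and>
           (AE x in lborel. opA phi2 a b x = f x) \<and>
           kond2_norm p (\<gamma> - 2) phi phi1 phi2 + \<bar>a\<bar> + \<bar>b\<bar> \<le> C * wLp_norm p \<gamma> f))"
proof (intro conjI)
  show "\<exists>C. \<forall>phi phi1 phi2 a b. kond2 p (\<gamma> - 2) phi phi1 phi2 \<longrightarrow>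
      wLp p \<gamma> (opA phi2 a b) \<and>
      wLp_norm p \<gamma> (opA phi2 a b) \<le> C * (kond2_norm p (\<gamma> - 2) phi phi1 phi2 + \<bar>a\<bar> + \<bar>b\<bar>)"
    using opA_bounded_kond2[of p "\<gamma> - 2"] assms(1) by simp
qed (use opA_injective[OF assms] opA_surjective[OF assms] in blast)+

end
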